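(* Let $D$ be a function assigning a nonnegative real number to each pair of density operators on the same finite-dimensional space and which is contractive under CPTP maps, i.e. $D(\Phi(\rho),\Phi(\sigma))\le D(\rho,\sigma)$ for all CPTP maps $\Phi$. Let $\rho$ be a density operator on $\mathbb{C}^d$, $\rho'=U_A(\rho\otimes|0\rangle\langle0|^{\otimes d})U_A^\dagger$ and $\rho''=\Delta(\rho')$. Then for every $2\le k\le d$, $$C_D^{(k)}(\rho)\ge E_D^{(k+1)}(\rho'),\qquad C_D^{(k)}(\rho)\ge E_D^{(k)}(\rho''),$$ where $E_D^{(k+1)}(\rho')$ is computed with respect to the $d+1$ parties (qudit and $d$ qubits) and $E_D^{(k)}(\rho'')$ with respect to the $d$ qubit parties.
   Context: Fix an orthonormal basis $\{|i\rangle\}_{i=1}^d$ of $\mathbb{C}^d$. The coherence rank $\mathrm{CR}(|\psi\rangle)$ is the number of nonzero coefficients of $|\psi\rangle$ in this basis; $\mathrm{CN}(\rho)=\min\max_i\mathrm{CR}(|\psi_i\rangle)$ over pure-state decompositions $\rho=\sum_ip_i|\psi_i\rangle\langle\psi_i|$. $\mathcal{I}^{(k)}$ is the set of states with $\mathrm{CN}\le k$. A multipartite pure state is $k$-producible if it is a tensor product of factors each on at most $k$ parties, a mixed state is $k$-producible if it is a convex combination of such; $\mathcal{P}^{(k)}$ denotes the set of $k$-producible states. Define $E_D^{(k)}(\rho)=\inf_{\varsigma\in\mathcal{P}^{(k-1)}}D(\rho,\varsigma)$ and $C_D^{(k)}(\rho)=\inf_{\sigma\in\mathcal{I}^{(k-1)}}D(\rho,\sigma)$.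 Notation $|\underline{2^{d-i}}\rangle=|0\rangle^{\otimes(i-1)}|1\rangle|0\rangle^{\otimes(d-i)}\in(\mathbb{C}^2)^{\otimes d}$. $U_A=\sum_{i=1}^d|i\rangle\langle i|\otimes\mathbb{1}_2^{\otimes(i-1)}\otimes\sigma_x\otimes\mathbb{1}_2^{\otimes(d-i)}$. With $\mathcal{F}|j\rangle=\frac1{\sqrt d}\sum_m e^{2\pi ijm/d}|m\rangle$ and $U_D^{(m)}=\bigotimes_{j=1}^d(|0\rangle\langle0|+e^{-2\pi ijm/d}|1\rangle\langle1|)$, the map $\Delta$ from qudit-plus-$d$-qubit states to $d$-qubit states is $\Delta(X)=\sum_{m=1}^dU_D^{(m)}\mathrm{Tr}_{\mathrm{qudit}}[(|m\rangle\langle m|\otimes\mathbb{1})(\mathcal{F}\otimes\mathbb{1})X(\mathcal{F}^\dagger\otimes\mathbb{1})]U_D^{(m)\dagger}$. *)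

theory Defs
  imports Complex_Main "Jordan_Normal_Form.Matrix"
begin

section \<open>Basic matrix notions (indices 0-based; basis vector |i> of the paper is index i-1)\<close>

definition adj :: "complex mat \<Rightarrow> complex mat" where
  "adj A = mat (dim_col A) (dim_row A) (\<lambda>(i,j). cnj (A $$ (j,i)))"

definition kron :: "complex mat \<Rightarrow> complex mat \<Rightarrow> complex mat" where
  "kron A B = mat (dim_row A * dim_row B) (dim_col A * dim_col B)
     (\<lambda>(i,j). A $$ (i div dim_row B, j div dim_col B) * B $$ (i mod dim_row B, j mod dim_col B))"

fun kron_pow :: "complex mat \<Rightarrow> nat \<Rightarrow> complex mat" where
  "kron_pow A 0 = 1\<^sub>m 1"
| "kron_pow A (Suc n) = kron A (kron_pow A n)"

definition msum :: "nat \<Rightarrow> ('b \<Rightarrow> complex mat) \<Rightarrow> 'b list \<Rightarrow> complex mat" where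
  "msum n f xs = foldr (\<lambda>i acc. f i + acc) xs (0\<^sub>m n n)"

definition ketbra :: "nat \<Rightarrow> nat \<Rightarrow> nat \<Rightarrow> complex mat" where
  "ketbra n a b = mat n n (\<lambda>(i,j). if i = a \<and> j = b then 1 else 0)"

definition proj :: "complex vec \<Rightarrow> complex mat" where
  "proj v = mat (dim_vec v) (dim_vec v) (\<lambda>(i,j). v $ i * cnj (v $ j))"

definition unit_vec_c :: "nat \<Rightarrow> complex vec \<Rightarrow> bool" where
  "unit_vec_c n v \<longleftrightarrow> dim_vec v = n \<and> (\<Sum>i<n. (cmod (v $ i))\<^sup>2) = 1"

definition mtrace :: "complex mat \<Rightarrow> complex" where
  "mtrace A = (\<Sum>i<dim_row A. A $$ (i,i))"

definition psd :: "nat \<Rightarrow> complex mat \<Rightarrow> bool" where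
  "psd n A \<longleftrightarrow> A \<in> carrier_mat n n \<and>
     (\<forall>v. dim_vec v = n \<longrightarrow>
        (let z = (\<Sum>i<n. \<Sum>j<n. cnj (v $ i) * A $$ (i,j) * v $ j) in Im z = 0 \<and> Re z \<ge> 0))"

definition density :: "nat \<Rightarrow> complex mat \<Rightarrow> bool" where
  "density n \<rho> \<longleftrightarrow> psd n \<rho> \<and> mtrace \<rho> = 1"

definition ptrace_first :: "nat \<Rightarrow> nat \<Rightarrow> complex mat \<Rightarrow> complex mat" where
  "ptrace_first a b X = mat b b (\<lambda>(i,j). \<Sum>k<a. X $$ (k*b+i, k*b+j))"

definition block :: "nat \<Rightarrow> complex mat \<Rightarrow> nat \<Rightarrow> nat \<Rightarrow> complex mat" where
  "block n X a b = mat n n (\<lambda>(r,s). X $$ (a*n+r, b*n+s))"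

text \<open>(id_k (x) Phi) applied to a (k n) x (k n) matrix, the ancilla C^k being the first factor.\<close>
definition id_tensor :: "nat \<Rightarrow> nat \<Rightarrow> nat \<Rightarrow> (complex mat \<Rightarrow> complex mat) \<Rightarrow> complex mat \<Rightarrow> complex mat" where
  "id_tensor k n m \<Phi> X = mat (k*m) (k*m)
     (\<lambda>(i,j). \<Phi> (block n X (i div m) (j div m)) $$ (i mod m, j mod m))"

definition cptp :: "nat \<Rightarrow> nat \<Rightarrow> (complex mat \<Rightarrow> complex mat) \<Rightarrow> bool" where
  "cptp n m \<Phi> \<longleftrightarrow>
     (\<forall>X \<in> carrier_mat n n. \<Phi> X \<in> carrier_mat m m) \<and>
     (\<forall>X \<in> carrier_mat n n. \<forall>Y \<in> carrier_mat n n. \<forall>c. \<Phi> (c \<cdot>\<^sub>m X + Y) = c \<cdot>\<^sub>m \<Phi> X + \<Phi> Y) \<and>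
     (\<forall>X \<in> carrier_mat n n. mtrace (\<Phi> X) = mtrace X) \<and>
     (\<forall>k X. psd (k*n) X \<longrightarrow> psd (k*m) (id_tensor k n m \<Phi> X))"

definition contractive_distance :: "(complex mat \<Rightarrow> complex mat \<Rightarrow> real) \<Rightarrow> bool" where
  "contractive_distance D \<longleftrightarrow>
     (\<forall>n \<rho> \<sigma>. density n \<rho> \<and> density n \<sigma> \<longrightarrow> 0 \<le> D \<rho> \<sigma>) \<and>
     (\<forall>n m \<Phi> \<rho> \<sigma>. cptp n m \<Phi> \<and> density n \<rho> \<and> density n \<sigma> \<longrightarrow> D (\<Phi> \<rho>) (\<Phi> \<sigma>) \<le> D \<rho> \<sigma>)"

definition pure_decomp :: "nat \<Rightarrow> complex mat \<Rightarrow> (real \<times> complex vec) list \<Rightarrow> bool" where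
  "pure_decomp n \<rho> ps \<longleftrightarrow> ps \<noteq> [] \<and>
     (\<forall>(p,\<psi>) \<in> set ps. p > 0 \<and> unit_vec_c n \<psi>) \<and>
     (\<Sum>(p,\<psi>)\<leftarrow>ps. p) = 1 \<and>
     \<rho> = msum n (\<lambda>(p,\<psi>). complex_of_real p \<cdot>\<^sub>m proj \<psi>) ps"

definition coh_rank :: "complex vec \<Rightarrow> nat" where
  "coh_rank \<psi> = card {i. i < dim_vec \<psi> \<and> \<psi> $ i \<noteq> 0}"

definition coh_number :: "nat \<Rightarrow> complex mat \<Rightarrow> nat" where
  "coh_number n \<rho> = (LEAST r. \<exists>ps. pure_decomp n \<rho> ps \<and> (\<forall>(p,\<psi>) \<in> set ps. coh_rank \<psi> \<le> r))"

definition incoh_set :: "nat \<Rightarrow> nat \<Rightarrow> complex mat set" where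
  "incoh_set d k = {\<sigma>. density d \<sigma> \<and> coh_number d \<sigma> \<le> k}"

text \<open>Parties with local dimensions dims; the total space is the Kronecker product in list order,
  party 0 being the most significant digit.\<close>
definition digit :: "nat list \<Rightarrow> nat \<Rightarrow> nat \<Rightarrow> nat" where
  "digit dims x i = (x div prod_list (drop (Suc i) dims)) mod (dims ! i)"

definition k_partition :: "nat \<Rightarrow> nat \<Rightarrow> nat set set \<Rightarrow> bool" where
  "k_partition N k P \<longleftrightarrow> \<Union>P = {..<N} \<and> (\<forall>B\<in>P. B \<noteq> {} \<and> card B \<le> k) \<and>
     (\<forall>B\<in>P. \<forall>C\<in>P. B \<noteq> C \<longrightarrow> B \<inter> C = {})"

text \<open>psi is a tensor product of factors, one factor for each block of a partition of the parties
  into blocks of at most k parties.\<close>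
definition k_producible_pure :: "nat list \<Rightarrow> nat \<Rightarrow> complex vec \<Rightarrow> bool" where
  "k_producible_pure dims k \<psi> \<longleftrightarrow> unit_vec_c (prod_list dims) \<psi> \<and>
     (\<exists>P \<phi>. k_partition (length dims) k P \<and>
        (\<forall>x < prod_list dims. \<psi> $ x =
           (\<Prod>B\<in>P. \<phi> B (\<lambda>j. if j \<in> B then digit dims x j else 0))))"

definition producible_set :: "nat list \<Rightarrow> nat \<Rightarrow> complex mat set" where
  "producible_set dims k = {\<rho>. \<exists>ps. pure_decomp (prod_list dims) \<rho> ps \<and>
     (\<forall>(p,\<psi>) \<in> set ps. k_producible_pure dims k \<psi>)}"

definition E_D :: "(complex mat \<Rightarrow> complex mat \<Rightarrow> real) \<Rightarrow> nat list \<Rightarrow> nat \<Rightarrow> complex mat \<Rightarrow> real" where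
  "E_D D dims k \<rho> = Inf ((\<lambda>s. D \<rho> s) ` producible_set dims (k - 1))"

definition C_D :: "(complex mat \<Rightarrow> complex mat \<Rightarrow> real) \<Rightarrow> nat \<Rightarrow> nat \<Rightarrow> complex mat \<Rightarrow> real" where
  "C_D D d k \<rho> = Inf ((\<lambda>\<sigma>. D \<rho> \<sigma>) ` incoh_set d (k - 1))"

definition sigma_x :: "complex mat" where
  "sigma_x = mat 2 2 (\<lambda>(i,j). if i \<noteq> j then 1 else 0)"

text \<open>U_A = sum_i |i><i| (x) 1^(i-1) (x) sigma_x (x) 1^(d-i); here i is 0-based.\<close>
definition U_A :: "nat \<Rightarrow> complex mat" where
  "U_A d = msum (d * 2^d)
     (\<lambda>i. kron (ketbra d i i) (kron (1\<^sub>m (2^i)) (kron sigma_x (1\<^sub>m (2^(d - Suc i)))))) [0..<d]"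

definition zero_proj :: "nat \<Rightarrow> complex mat" where
  "zero_proj d = kron_pow (ketbra 2 0 0) d"

definition rho' :: "nat \<Rightarrow> complex mat \<Rightarrow> complex mat" where
  "rho' d \<rho> = U_A d * kron \<rho> (zero_proj d) * adj (U_A d)"

text \<open>Fourier matrix: F|j> = 1/sqrt d sum_m e^(2 pi i j m/d) |m>, paper indices j,m in 1..d
  correspond to 0-based a = j-1, b = m-1.\<close>
definition fourier :: "nat \<Rightarrow> complex mat" where
  "fourier d = mat d d (\<lambda>(b,a). cis (2 * pi * real (Suc a) * real (Suc b) / real d) / complex_of_real (sqrt (real d)))"

text \<open>U_D^(m) = tensor_{j=1..d} (|0><0| + e^(-2 pi i j m/d)|1><1|), m paper index 1..d.\<close>
definition U_D :: "nat \<Rightarrow> nat \<Rightarrow> complex mat" where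
  "U_D d m = foldr (\<lambda>j acc. kron (mat 2 2 (\<lambda>(r,s). if r = 0 \<and> s = 0 then 1
                          else if r = 1 \<and> s = 1 then cis (- 2 * pi * real j * real m / real d) else 0)) acc)
             [1..<Suc d] (1\<^sub>m 1)"

definition Delta :: "nat \<Rightarrow> complex mat \<Rightarrow> complex mat" where
  "Delta d X = msum (2^d)
     (\<lambda>m. U_D d m *
        ptrace_first d (2^d)
          (kron (ketbra d (m - 1) (m - 1)) (1\<^sub>m (2^d)) * (kron (fourier d) (1\<^sub>m (2^d))) * X *
           (kron (adj (fourier d)) (1\<^sub>m (2^d))))
        * adj (U_D d m)) [1..<Suc d]"

end

theory Submission
  imports Defs
begin

text \<open>Both \<open>\<rho> \<mapsto> \<rho>'\<close> and \<open>\<rho> \<mapsto> \<Delta>(\<rho>')\<close> are CPTP maps, so by contractivity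
  \<open>D(\<rho>,\<sigma>) \<ge> D(\<Phi> \<rho>, \<Phi> \<sigma>)\<close>, and it suffices that they send every state of coherence number
  below \<open>k\<close> to a \<open>k\<close>-producible state of the qudit and the \<open>d\<close> qubits, resp. to a
  \<open>(k-1)\<close>-producible state of the qubits. For a pure state \<open>\<psi> = \<Sum>\<^sub>a\<^sub>\<in>\<^sub>S \<psi>\<^sub>a |a\<rangle>\<close> with
  \<open>|S| < k\<close>, \<open>U\<^sub>A\<close> maps \<open>\<psi> \<otimes> |0\<dots>0\<rangle>\<close> to \<open>\<Sum>\<^sub>a\<^sub>\<in>\<^sub>S \<psi>\<^sub>a |a\<rangle>|2\<^sup>d\<^sup>-\<^sup>1\<^sup>-\<^sup>a\<rangle>\<close>: qubit \<open>a\<close> is flipped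
  exactly when the qudit is in \<open>|a\<rangle>\<close>, so the state is a product of a state of the qudit and the
  qubits in \<open>S\<close> with \<open>|0\<rangle>\<close> on every other qubit. The Kraus operators of \<open>\<Delta> \<circ> U\<^sub>A\<close> send \<open>|a\<rangle>\<close>
  to a multiple of \<open>|2\<^sup>d\<^sup>-\<^sup>1\<^sup>-\<^sup>a\<rangle>\<close>, so there only the qubits in \<open>S\<close> remain entangled. Mixed states
  follow by decomposing them into pure states and pushing the decomposition through the Kraus
  operators.\<close>

section \<open>Matrix entries\<close>

lemma sum_lessThan_mult:
  "(\<Sum>i<a*b. f i) = (\<Sum>x<a. \<Sum>y<b. f (x*b + y::nat))"
proof -
  have "(\<Sum>y<b. f (x*b + y)) = sum f {x*b..<x*b + b}" for x
    using sum.shift_bounds_nat_ivl[of f 0 "x*b" b] by (simp add: atLeast0LessThan add.commute)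
  then show ?thesis
    using sum.nat_group[of f b a] by (simp add: mult.commute)
qed

lemma sum_lessThan_single:
  assumes "a < n" "\<And>j. j < n \<Longrightarrow> j \<noteq> a \<Longrightarrow> g j = 0"
  shows "(\<Sum>j<(n::nat). g j) = g a"
proof -
  have "(\<Sum>j<n. g j) = (\<Sum>j\<in>{a}. g j)"
    using assms by (intro sum.mono_neutral_right) auto
  then show ?thesis by simp
qed

lemma sum_lessThan_pair:
  assumes "a < n" "b < n" "a \<noteq> b" "\<And>j. j < n \<Longrightarrow> j \<noteq> a \<Longrightarrow> j \<noteq> b \<Longrightarrow> g j = 0"
  shows "(\<Sum>j<(n::nat). g j) = g a + g b"
proof -
  have "(\<Sum>j<n. g j) = (\<Sum>j\<in>{a,b}. g j)"
    using assms by (intro sum.mono_neutral_right) auto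
  then show ?thesis using assms by simp
qed

lemma sum_swap4:
  "(\<Sum>i\<in>A. \<Sum>j\<in>B. \<Sum>c\<in>C. \<Sum>e\<in>E. f i j c e) = (\<Sum>c\<in>C. \<Sum>e\<in>E. \<Sum>i\<in>A. \<Sum>j\<in>B. f i j c e)"
proof -
  have "(\<Sum>i\<in>A. \<Sum>j\<in>B. \<Sum>c\<in>C. \<Sum>e\<in>E. f i j c e) = (\<Sum>i\<in>A. \<Sum>c\<in>C. \<Sum>j\<in>B. \<Sum>e\<in>E. f i j c e)"
    by (rule sum.cong[OF refl], rule sum.swap)
  also have "\<dots> = (\<Sum>c\<in>C. \<Sum>i\<in>A. \<Sum>j\<in>B. \<Sum>e\<in>E. f i j c e)"
    by (rule sum.swap)
  also have "\<dots> = (\<Sum>c\<in>C. \<Sum>i\<in>A. \<Sum>e\<in>E. \<Sum>j\<in>B. f i j c e)"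
    by (rule sum.cong[OF refl], rule sum.cong[OF refl], rule sum.swap)
  also have "\<dots> = (\<Sum>c\<in>C. \<Sum>e\<in>E. \<Sum>i\<in>A. \<Sum>j\<in>B. f i j c e)"
    by (rule sum.cong[OF refl], rule sum.swap)
  finally show ?thesis .
qed

lemma cnj_mult_self_cmod: "cnj z * z = complex_of_real ((cmod z)^2)"
  by (metis complex_norm_square mult.commute)

lemma index_mult_mat_lessThan:
  assumes "i < dim_row A" "j < dim_col B" "dim_col A = dim_row B"
  shows "(A * B) $$ (i,j) = (\<Sum>k<dim_col A. A $$ (i,k) * B $$ (k,j))"
  using assms by (simp add: scalar_prod_def atLeast0LessThan)

lemma dim_adj[simp]: "dim_row (adj A) = dim_col A" "dim_col (adj A) = dim_row A"
  by (auto simp: adj_def)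

lemma index_adj[simp]: "i < dim_col A \<Longrightarrow> j < dim_row A \<Longrightarrow> adj A $$ (i,j) = cnj (A $$ (j,i))"
  by (simp add: adj_def)

lemma dim_kron[simp]:
  "dim_row (kron A B) = dim_row A * dim_row B" "dim_col (kron A B) = dim_col A * dim_col B"
  by (auto simp: kron_def)

lemma index_kron:
  "i < dim_row A * dim_row B \<Longrightarrow> j < dim_col A * dim_col B \<Longrightarrow>
   kron A B $$ (i,j) = A $$ (i div dim_row B, j div dim_col B) * B $$ (i mod dim_row B, j mod dim_col B)"
  by (simp add: kron_def)

lemma dim_ketbra[simp]: "dim_row (ketbra n a b) = n" "dim_col (ketbra n a b) = n"
  by (auto simp: ketbra_def)

lemma index_ketbra[simp]:
  "i < n \<Longrightarrow> j < n \<Longrightarrow> ketbra n a b $$ (i,j) = (if i = a \<and> j = b then 1 else 0)"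
  by (simp add: ketbra_def)

lemma dim_proj[simp]: "dim_row (proj v) = dim_vec v" "dim_col (proj v) = dim_vec v"
  by (auto simp: proj_def)

lemma index_proj[simp]:
  "i < dim_vec v \<Longrightarrow> j < dim_vec v \<Longrightarrow> proj v $$ (i,j) = v$i * cnj (v$j)"
  by (simp add: proj_def)

lemma msum_carrier_mat:
  assumes "\<And>x. x \<in> set xs \<Longrightarrow> f x \<in> carrier_mat n n"
  shows "msum n f xs \<in> carrier_mat n n"
  using assms by (induction xs) (auto simp: msum_def)

lemma index_msum:
  assumes "\<And>x. x \<in> set xs \<Longrightarrow> f x \<in> carrier_mat n n" "i < n" "j < n"
  shows "msum n f xs $$ (i,j) = (\<Sum>x\<leftarrow>xs. f x $$ (i,j))"
  using assms
proof (induction xs)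
  case Nil
  then show ?case by (simp add: msum_def)
next
  case (Cons a xs)
  have "msum n f xs \<in> carrier_mat n n" using Cons by (intro msum_carrier_mat) auto
  moreover have "msum n f (a#xs) = f a + msum n f xs" by (simp add: msum_def)
  ultimately show ?case using Cons by simp
qed

lemma index_sandwich:
  assumes "V \<in> carrier_mat m n" "X \<in> carrier_mat n n" "i < m" "j < m"
  shows "(V * X * adj V) $$ (i,j) = (\<Sum>a<n. \<Sum>b<n. V$$(i,a) * X$$(a,b) * cnj (V$$(j,b)))"
proof -
  have "(V * X * adj V) $$ (i,j) = (\<Sum>b<n. (V*X)$$(i,b) * cnj (V$$(j,b)))"
    using assms by (subst index_mult_mat_lessThan) auto
  also have "\<dots> = (\<Sum>b<n. (\<Sum>a<n. V$$(i,a) * X$$(a,b)) * cnj (V$$(j,b)))"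
    using assms by (intro sum.cong refl, subst index_mult_mat_lessThan) auto
  also have "\<dots> = (\<Sum>a<n. \<Sum>b<n. V$$(i,a) * X$$(a,b) * cnj (V$$(j,b)))"
    unfolding sum_distrib_right by (rule sum.swap)
  finally show ?thesis .
qed

section \<open>Positive semidefinite matrices\<close>

definition quad_form :: "nat \<Rightarrow> complex mat \<Rightarrow> complex vec \<Rightarrow> complex" where
  "quad_form n A v = (\<Sum>i<n. \<Sum>j<n. cnj (v $ i) * A $$ (i,j) * v $ j)"

lemma psd_iff_quad_form:
  "psd n A \<longleftrightarrow> A \<in> carrier_mat n n \<and>
     (\<forall>v. dim_vec v = n \<longrightarrow> Im (quad_form n A v) = 0 \<and> Re (quad_form n A v) \<ge> 0)"
  by (simp add: psd_def quad_form_def Let_def)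

lemma psd_carrier_mat: "psd n A \<Longrightarrow> A \<in> carrier_mat n n"
  by (simp add: psd_iff_quad_form)

lemma quad_form_rank_one_sum:
  "(\<Sum>i<n. \<Sum>j<n. cnj (v$i) * (\<Sum>(p,w)\<leftarrow>ws. complex_of_real p * w$i * cnj (w$j)) * v$j)
   = complex_of_real (\<Sum>(p,w)\<leftarrow>ws. p * (cmod (\<Sum>j<n. cnj (w$j) * v$j))^2)"
proof (induction ws)
  case Nil
  then show ?case by simp
next
  case (Cons pw ws)
  obtain p w where pw: "pw = (p,w)" by (cases pw)
  define c where "c = (\<Sum>j<n. cnj (w$j) * v$j)"
  have "(\<Sum>i<n. \<Sum>j<n. cnj (v$i) * (complex_of_real p * w$i * cnj (w$j)) * v$j)
      = complex_of_real p * ((\<Sum>i<n. cnj (v$i) * w$i) * c)"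
    by (simp add: c_def sum_distrib_left sum_distrib_right mult_ac)
  also have "(\<Sum>i<n. cnj (v$i) * w$i) = cnj c"
    by (simp add: mult.commute c_def)
  finally have head: "(\<Sum>i<n. \<Sum>j<n. cnj (v$i) * (complex_of_real p * w$i * cnj (w$j)) * v$j)
      = complex_of_real (p * (cmod c)^2)"
    by (simp add: cnj_mult_self_cmod)
  show ?case
    using head Cons.IH by (simp add: pw c_def ring_distribs sum.distrib)
qed

lemma psd_of_rank_one_sum:
  assumes "A \<in> carrier_mat n n"
    and "\<And>i j. i < n \<Longrightarrow> j < n \<Longrightarrow> A$$(i,j) = (\<Sum>(p,w)\<leftarrow>ws. complex_of_real p * w$i * cnj (w$j))"
    and "\<And>p w. (p,w) \<in> set ws \<Longrightarrow> p \<ge> 0"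
  shows "psd n A"
proof -
  have "quad_form n A v = complex_of_real (\<Sum>(p,w)\<leftarrow>ws. p * (cmod (\<Sum>j<n. cnj (w$j) * v$j))^2)" for v
    unfolding quad_form_def by (subst quad_form_rank_one_sum[symmetric]) (simp add: assms(2))
  moreover have "(\<Sum>(p,w)\<leftarrow>ws. p * (cmod (\<Sum>j<n. cnj (w$j) * v$j))^2) \<ge> 0" for v
    by (rule sum_list_nonneg) (use assms(3) in auto)
  ultimately show ?thesis using assms(1) by (simp add: psd_iff_quad_form)
qed

lemma quad_form_single:
  assumes "a < n"
  shows "quad_form n A (vec n (\<lambda>i. if i = a then x else 0)) = cnj x * A$$(a,a) * x"
proof -
  define v where "v = vec n (\<lambda>i. if i = a then x else 0)"
  have inner: "(\<Sum>j<n. cnj (v$i) * A$$(i,j) * v$j) = cnj (v$i) * A$$(i,a) * v$a" for i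
    by (rule sum_lessThan_single[OF assms]) (simp add: v_def)
  have "quad_form n A v = (\<Sum>j<n. cnj (v$a) * A$$(a,j) * v$j)"
    unfolding quad_form_def by (rule sum_lessThan_single[OF assms]) (simp add: v_def)
  also have "\<dots> = cnj (v$a) * A$$(a,a) * v$a" by (rule inner)
  finally show ?thesis using assms by (simp add: v_def)
qed

lemma quad_form_pair:
  assumes "a < n" "b < n" "a \<noteq> b"
  shows "quad_form n A (vec n (\<lambda>i. if i = a then x else if i = b then y else 0)) =
    cnj x * A$$(a,a) * x + cnj x * A$$(a,b) * y + cnj y * A$$(b,a) * x + cnj y * A$$(b,b) * y"
proof -
  define v where "v = vec n (\<lambda>i. if i = a then x else if i = b then y else 0)"
  have inner: "(\<Sum>j<n. cnj (v$i) * A$$(i,j) * v$j)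
      = cnj (v$i) * A$$(i,a) * v$a + cnj (v$i) * A$$(i,b) * v$b" for i
    by (rule sum_lessThan_pair[OF assms]) (simp add: v_def)
  have "quad_form n A v = (\<Sum>j<n. cnj (v$a) * A$$(a,j) * v$j) + (\<Sum>j<n. cnj (v$b) * A$$(b,j) * v$j)"
    unfolding quad_form_def by (rule sum_lessThan_pair[OF assms]) (simp add: v_def)
  also have "\<dots> = cnj (v$a) * A$$(a,a) * v$a + cnj (v$a) * A$$(a,b) * v$b
      + (cnj (v$b) * A$$(b,a) * v$a + cnj (v$b) * A$$(b,b) * v$b)"
    by (simp only: inner)
  finally show ?thesis using assms by (simp add: v_def not_sym[OF assms(3)] add.assoc)
qed

lemma psd_diag:
  assumes "psd n A" "i < n"
  shows "Im (A$$(i,i)) = 0" "Re (A$$(i,i)) \<ge> 0"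
proof -
  let ?e = "vec n (\<lambda>k. if k = i then 1 else 0)"
  have "Im (quad_form n A ?e) = 0 \<and> Re (quad_form n A ?e) \<ge> 0"
    using assms(1) by (simp add: psd_iff_quad_form)
  then show "Im (A$$(i,i)) = 0" "Re (A$$(i,i)) \<ge> 0"
    using quad_form_single[OF assms(2), of A 1] by auto
qed

lemma psd_hermitian:
  assumes "psd n A" "i < n" "j < n"
  shows "A$$(i,j) = cnj (A$$(j,i))"
proof (cases "i = j")
  case True
  then show ?thesis using psd_diag[OF assms(1,2)] by (simp add: complex_eq_iff)
next
  case False
  have d: "Im (A$$(i,i)) = 0" "Im (A$$(j,j)) = 0" using psd_diag assms by auto
  have "Im (quad_form n A (vec n (\<lambda>k. if k = i then 1 else if k = j then 1 else 0))) = 0"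
    using assms(1) by (simp add: psd_iff_quad_form)
  then have im: "Im (A$$(i,j)) + Im (A$$(j,i)) = 0"
    using quad_form_pair[OF assms(2,3) False, of A 1 1] d by simp
  have "Im (quad_form n A (vec n (\<lambda>k. if k = i then 1 else if k = j then \<i> else 0))) = 0"
    using assms(1) by (simp add: psd_iff_quad_form)
  then have re: "Re (A$$(i,j)) - Re (A$$(j,i)) = 0"
    using quad_form_pair[OF assms(2,3) False, of A 1 \<i>] d by simp
  show ?thesis using im re by (simp add: complex_eq_iff)
qed

text \<open>Testing with \<open>v = -c z |t\<rangle> + |j\<rangle>\<close>, \<open>z = A\<^sub>t\<^sub>j\<close>, gives \<open>A\<^sub>j\<^sub>j - 2c|z|\<^sup>2 \<ge> 0\<close> for every \<open>c\<close>.\<close>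
lemma psd_zero_diag_row:
  assumes "psd n A" "t < n" "j < n" "A$$(t,t) = 0"
  shows "A$$(t,j) = 0"
proof (rule ccontr)
  assume nz: "A$$(t,j) \<noteq> 0"
  then have tj: "t \<noteq> j" using assms by auto
  define z where "z = A$$(t,j)"
  define r where "r = (Re z)^2 + (Im z)^2"
  have r: "r > 0" using nz unfolding r_def z_def
    by (metis add_nonneg_pos complex_eq_iff sum_power2_gt_zero_iff zero_complex.sel)
  define c where "c = (Re (A$$(j,j)) + 1) / (2 * r)"
  let ?v = "vec n (\<lambda>k. if k = t then - (complex_of_real c * z) else if k = j then 1 else 0)"
  have h: "A$$(j,t) = cnj z" using psd_hermitian[OF assms(1,3,2)] z_def by simp
  have cz: "cnj z * z = complex_of_real r" by (simp add: r_def complex_mult_cnj mult.commute)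
  have s1: "cnj (-(complex_of_real c * z)) * z = - complex_of_real (c*r)"
    using cz by (simp add: mult.assoc)
  have s2: "cnj z * (-(complex_of_real c * z)) = - complex_of_real (c*r)"
    using cz by (metis minus_mult_right mult.left_commute of_real_mult)
  have q: "quad_form n A ?v = A$$(j,j) - complex_of_real (2*c*r)"
    using quad_form_pair[OF assms(2,3) tj, of A "- (complex_of_real c * z)" 1] assms(4) h cz
    by (simp add: z_def[symmetric] s1 s2 mult.commute)
  have "0 \<le> Re (quad_form n A ?v)"
    using assms(1) by (simp add: psd_iff_quad_form)
  also have "Re (quad_form n A ?v) = Re (A$$(j,j)) - 2 * c * r"
    unfolding q by simp
  also have "\<dots> = -1"
    using r unfolding c_def by (simp add: field_simps)
  finally show False by simp
qed

lemma quad_form_shift: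
  assumes "t < n"
  shows "quad_form n A (vec n (\<lambda>i. x$i + (if i = t then s else 0))) =
     quad_form n A x + cnj s * (\<Sum>j<n. A$$(t,j) * x$j) + s * (\<Sum>i<n. cnj (x$i) * A$$(i,t))
     + cnj s * s * A$$(t,t)"
proof -
  have sum_if: "(\<Sum>j\<in>A. if P then f j else 0) = (if P then (\<Sum>j\<in>A. f j) else 0)" for A P f
    by (cases P) auto
  have pt: "cnj (vec n (\<lambda>i. x$i + (if i = t then s else 0)) $ i) * A$$(i,j)
        * (vec n (\<lambda>i. x$i + (if i = t then s else 0)) $ j)
     = cnj (x$i) * A$$(i,j) * x$j + (if j = t then cnj (x$i) * A$$(i,t) * s else 0)
       + (if i = t then cnj s * (A$$(t,j) * x$j) else 0)
       + (if i = t then (if j = t then cnj s * s * A$$(t,t) else 0) else 0)"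
    if "i < n" "j < n" for i j
    using that by (cases "i = t"; cases "j = t") (simp_all add: ring_distribs)
  have "quad_form n A (vec n (\<lambda>i. x$i + (if i = t then s else 0))) =
    (\<Sum>i<n. \<Sum>j<n. cnj (x$i) * A$$(i,j) * x$j + (if j = t then cnj (x$i) * A$$(i,t) * s else 0)
       + (if i = t then cnj s * (A$$(t,j) * x$j) else 0)
       + (if i = t then (if j = t then cnj s * s * A$$(t,t) else 0) else 0))"
    unfolding quad_form_def by (intro sum.cong refl pt) auto
  also have "\<dots> = quad_form n A x + (\<Sum>i<n. cnj (x$i) * A$$(i,t) * s)
      + cnj s * (\<Sum>j<n. A$$(t,j) * x$j) + cnj s * s * A$$(t,t)"
    using assms by (simp add: sum.distrib quad_form_def sum_distrib_left sum_if)
  finally show ?thesis by (simp add: sum_distrib_left sum_distrib_right mult_ac)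
qed

lemma psd_schur_complement:
  assumes A: "psd n A" and t: "t < n" and a: "A$$(t,t) = complex_of_real a" "a > 0"
  shows "psd n (mat n n (\<lambda>(i,j). A$$(i,j) - A$$(i,t) * cnj (A$$(j,t)) / complex_of_real a))"
    (is "psd n ?A'")
proof -
  have "Im (quad_form n ?A' x) = 0 \<and> Re (quad_form n ?A' x) \<ge> 0" if x: "dim_vec x = n" for x
  proof -
    define B where "B = (\<Sum>j<n. cnj (A$$(j,t)) * x$j)"
    define s where "s = - B / complex_of_real a"
    have cB: "(\<Sum>i<n. cnj (x$i) * A$$(i,t)) = cnj B" by (simp add: B_def mult.commute)
    have "quad_form n ?A' x = (\<Sum>i<n. \<Sum>j<n. cnj (x$i) * A$$(i,j) * x$j
        - (cnj (x$i) * A$$(i,t)) * (cnj (A$$(j,t)) * x$j) / complex_of_real a)"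
      unfolding quad_form_def by (intro sum.cong refl) (auto simp: algebra_simps)
    also have "\<dots> = quad_form n A x
        - (\<Sum>i<n. cnj (x$i) * A$$(i,t)) * (\<Sum>j<n. cnj (A$$(j,t)) * x$j) / complex_of_real a"
      by (simp add: quad_form_def sum_subtractf sum_divide_distrib sum_product)
    finally have q1: "quad_form n ?A' x = quad_form n A x - cnj B * B / complex_of_real a"
      by (simp add: cB B_def)
    have RB: "(\<Sum>j<n. A$$(t,j) * x$j) = B"
      unfolding B_def by (intro sum.cong refl) (simp add: psd_hermitian[OF A t])
    \<comment> \<open>the Schur complement's form at \<open>x\<close> is the form of \<open>A\<close> at \<open>x + s |t\<rangle>\<close>\<close>
    have q2: "quad_form n A (vec n (\<lambda>i. x$i + (if i = t then s else 0)))
        = quad_form n A x - cnj B * B / complex_of_real a"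
      unfolding quad_form_shift[OF t] RB cB a(1) s_def using a(2)
      by (simp add: field_simps power2_eq_square)
    have "Im (quad_form n A (vec n (\<lambda>i. x$i + (if i = t then s else 0)))) = 0 \<and>
        Re (quad_form n A (vec n (\<lambda>i. x$i + (if i = t then s else 0)))) \<ge> 0"
      using A by (simp add: psd_iff_quad_form)
    then show ?thesis
      using q1 q2 by simp
  qed
  then show ?thesis by (simp add: psd_iff_quad_form)
qed

text \<open>Induction on the number \<open>m\<close> of trailing rows and columns that may be nonzero: the pivot
  \<open>t = n - 1 - m\<close> either has a zero row or its Schur complement splits off the rank-one term
  \<open>v v\<^sup>\<dagger>\<close>, \<open>v = A e\<^sub>t / \<surd>A\<^sub>t\<^sub>t\<close>.\<close>
lemma psd_rank_one_decomposition_supported: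
  assumes "psd n A" "\<forall>i<n. \<forall>j<n. (i < n - m \<or> j < n - m) \<longrightarrow> A$$(i,j) = 0"
  shows "\<exists>vs. (\<forall>v\<in>set vs. dim_vec v = n) \<and> (\<forall>i<n. \<forall>j<n. A$$(i,j) = (\<Sum>v\<leftarrow>vs. v$i * cnj (v$j)))"
  using assms
proof (induction m arbitrary: A)
  case 0
  then show ?case by (intro exI[of _ "[]"]) auto
next
  case (Suc m)
  note A = Suc.prems(1) and supp = Suc.prems(2)
  show ?case
  proof (cases "m < n")
    case False
    then show ?thesis using Suc.IH A supp by auto
  next
    case True
    define t where "t = n - Suc m"
    have t: "t < n" "n - m = Suc t" using True by (auto simp: t_def)
    show ?thesis
    proof (cases "A$$(t,t) = 0")
      case True
      have "A$$(t,j) = 0" "A$$(j,t) = 0" if "j < n" for j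
        using psd_zero_diag_row[OF A t(1) that True] psd_hermitian[OF A that t(1)] by auto
      then have "\<forall>i<n. \<forall>j<n. (i < n - m \<or> j < n - m) \<longrightarrow> A$$(i,j) = 0"
        using supp unfolding t(2) t_def[symmetric] by (metis less_SucE)
      then show ?thesis using Suc.IH A by auto
    next
      case False
      define a where "a = Re (A$$(t,t))"
      have at: "A$$(t,t) = complex_of_real a"
        using psd_diag[OF A t(1)] by (simp add: a_def complex_eq_iff)
      have apos: "a > 0"
        using psd_diag[OF A t(1)] False at unfolding a_def by (metis less_eq_real_def of_real_0)
      define A' where "A' = mat n n (\<lambda>(i,j). A$$(i,j) - A$$(i,t) * cnj (A$$(j,t)) / complex_of_real a)"
      define v where "v = vec n (\<lambda>i. A$$(i,t) / complex_of_real (sqrt a))"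
      have "A'$$(i,j) = 0" if ij: "i < n" "j < n" "i < n - m \<or> j < n - m" for i j
      proof -
        have "i < t \<or> i = t \<or> j < t \<or> j = t" using ij t by auto
        moreover have "A$$(i,j) = 0" if "i < t \<or> j < t" using supp ij that t_def by auto
        moreover have "A$$(i,t) = 0" if "i < t" using supp ij that t_def t by auto
        moreover have "A$$(j,t) = 0" if "j < t" using supp ij that t_def t by auto
        moreover have "cnj (A$$(j,t)) = A$$(t,j)" using psd_hermitian[OF A t(1) ij(2)] by simp
        moreover have "cnj (A$$(t,t)) = complex_of_real a" using at by simp
        ultimately show ?thesis unfolding A'_def using ij apos at by auto
      qed
      then obtain vs where vs: "\<forall>v\<in>set vs. dim_vec v = n"
        "\<forall>i<n. \<forall>j<n. A'$$(i,j) = (\<Sum>v\<leftarrow>vs. v$i * cnj (v$j))"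
        using Suc.IH[of A'] psd_schur_complement[OF A t(1) at apos] unfolding A'_def by blast
      have sa: "complex_of_real (sqrt a) * complex_of_real (sqrt a) = complex_of_real a"
        using apos by (metis of_real_mult real_sqrt_mult_self abs_of_pos)
      have "v$i * cnj (v$j) = A$$(i,t) * cnj (A$$(j,t)) / complex_of_real a" if "i < n" "j < n" for i j
        using that by (simp add: v_def times_divide_times_eq sa)
      then have "A$$(i,j) = (\<Sum>v\<leftarrow>v#vs. v$i * cnj (v$j))" if "i < n" "j < n" for i j
        using vs(2) that unfolding A'_def by (simp add: diff_eq_eq)
      then show ?thesis using vs(1) by (intro exI[of _ "v#vs"]) (auto simp: v_def)
    qed
  qed
qed

lemma psd_rank_one_decomposition:
  assumes "psd n A"
  shows "\<exists>vs. (\<forall>v\<in>set vs. dim_vec v = n) \<and> (\<forall>i<n. \<forall>j<n. A$$(i,j) = (\<Sum>v\<leftarrow>vs. v$i * cnj (v$j)))"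
  using psd_rank_one_decomposition_supported[of n A n] assms by auto

section \<open>Pure-state decompositions\<close>

definition vec_sq_norm :: "complex vec \<Rightarrow> real" where
  "vec_sq_norm w = (\<Sum>i<dim_vec w. (cmod (w$i))^2)"

definition vec_normalize :: "complex vec \<Rightarrow> complex vec" where
  "vec_normalize w = vec (dim_vec w) (\<lambda>i. w$i / complex_of_real (sqrt (vec_sq_norm w)))"

lemma vec_sq_norm_nonneg: "vec_sq_norm w \<ge> 0"
  unfolding vec_sq_norm_def by (intro sum_nonneg) auto

lemma vec_sq_norm_eq_0: "vec_sq_norm w = 0 \<Longrightarrow> i < dim_vec w \<Longrightarrow> w$i = 0"
  unfolding vec_sq_norm_def by (subst (asm) sum_nonneg_eq_0_iff) auto

lemma dim_vec_normalize[simp]: "dim_vec (vec_normalize w) = dim_vec w"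
  by (simp add: vec_normalize_def)

lemma unit_vec_normalize:
  assumes "vec_sq_norm w > 0"
  shows "unit_vec_c (dim_vec w) (vec_normalize w)"
proof -
  have "(\<Sum>i<dim_vec w. (cmod (vec_normalize w $ i))^2) = (\<Sum>i<dim_vec w. (cmod (w$i))^2 / vec_sq_norm w)"
    using assms by (intro sum.cong refl) (simp add: vec_normalize_def norm_divide power_divide)
  also have "\<dots> = 1" using assms by (simp add: sum_divide_distrib[symmetric] vec_sq_norm_def)
  finally show ?thesis by (simp add: unit_vec_c_def)
qed

lemma vec_normalize_eq_0_iff:
  "i < dim_vec w \<Longrightarrow> vec_sq_norm w > 0 \<Longrightarrow> vec_normalize w $ i = 0 \<longleftrightarrow> w $ i = 0"
  by (simp add: vec_normalize_def)

lemma rank_one_vec_normalize: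
  assumes "vec_sq_norm w > 0" "i < dim_vec w" "j < dim_vec w"
  shows "complex_of_real (p * vec_sq_norm w) * vec_normalize w $ i * cnj (vec_normalize w $ j)
    = complex_of_real p * w$i * cnj (w$j)"
proof -
  define c where "c = complex_of_real (sqrt (vec_sq_norm w))"
  have cc: "c * c = complex_of_real (vec_sq_norm w)"
    unfolding c_def using assms(1) by (metis of_real_mult real_sqrt_mult_self abs_of_pos)
  have "vec_normalize w $ i * cnj (vec_normalize w $ j) = w$i * cnj (w$j) / complex_of_real (vec_sq_norm w)"
    using assms by (simp add: vec_normalize_def times_divide_times_eq c_def flip: cc)
  then show ?thesis using assms(1) by (simp add: mult.assoc)
qed

lemma mtrace_rank_one_sum:
  assumes "\<rho> \<in> carrier_mat n n"
    and "\<And>i j. i < n \<Longrightarrow> j < n \<Longrightarrow> \<rho>$$(i,j) = (\<Sum>(p,w)\<leftarrow>ws. complex_of_real p * w$i * cnj (w$j))"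
    and "\<And>p w. (p,w) \<in> set ws \<Longrightarrow> dim_vec w = n"
  shows "mtrace \<rho> = complex_of_real (\<Sum>(p,w)\<leftarrow>ws. p * vec_sq_norm w)"
proof -
  have "mtrace \<rho> = (\<Sum>i<n. \<Sum>(p,w)\<leftarrow>ws. complex_of_real p * w$i * cnj (w$i))"
    using assms(1,2) by (simp add: mtrace_def)
  also have "\<dots> = (\<Sum>(p,w)\<leftarrow>ws. \<Sum>i<n. complex_of_real p * w$i * cnj (w$i))"
    by (induction ws) (auto simp: sum.distrib)
  also have "\<dots> = (\<Sum>(p,w)\<leftarrow>ws. complex_of_real (p * vec_sq_norm w))"
  proof (intro arg_cong[where f=sum_list] map_cong refl)
    fix x assume "x \<in> set ws"
    moreover obtain p w where x: "x = (p,w)" by (cases x)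
    ultimately have w: "dim_vec w = n" using assms(3) by auto
    have "(\<Sum>i<n. complex_of_real p * w$i * cnj (w$i))
        = (\<Sum>i<n. complex_of_real p * complex_of_real ((cmod (w$i))^2))"
      by (rule sum.cong[OF refl]) (metis cnj_mult_self_cmod mult.assoc mult.commute)
    also have "\<dots> = complex_of_real (p * vec_sq_norm w)"
      using w by (simp add: vec_sq_norm_def sum_distrib_left)
    finally show "(\<lambda>(p,w). \<Sum>i<n. complex_of_real p * w$i * cnj (w$i)) x
        = (\<lambda>(p,w). complex_of_real (p * vec_sq_norm w)) x"
      using x by simp
  qed
  also have "\<dots> = complex_of_real (\<Sum>(p,w)\<leftarrow>ws. p * vec_sq_norm w)"
    by (induction ws) auto
  finally show ?thesis .
qed

lemma pure_decomp_entries: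
  assumes "pure_decomp n \<rho> ps"
  shows "\<rho> \<in> carrier_mat n n"
    "\<And>i j. i < n \<Longrightarrow> j < n \<Longrightarrow> \<rho>$$(i,j) = (\<Sum>(p,w)\<leftarrow>ps. complex_of_real p * w$i * cnj (w$j))"
proof -
  let ?f = "\<lambda>(p,\<psi>). complex_of_real p \<cdot>\<^sub>m proj \<psi>"
  have dim: "\<And>p \<psi>. (p,\<psi>) \<in> set ps \<Longrightarrow> dim_vec \<psi> = n"
    and rho: "\<rho> = msum n ?f ps"
    using assms unfolding pure_decomp_def unit_vec_c_def by auto
  have c: "?f x \<in> carrier_mat n n" if "x \<in> set ps" for x
  proof (cases x)
    case (Pair p \<psi>)
    then show ?thesis using that dim by (auto intro!: carrier_matI)
  qed
  show "\<rho> \<in> carrier_mat n n" unfolding rho by (rule msum_carrier_mat[OF c])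
  fix i j assume ij: "i < n" "j < n"
  have "\<rho>$$(i,j) = (\<Sum>x\<leftarrow>ps. ?f x $$ (i,j))"
    unfolding rho by (rule index_msum[OF c ij])
  also have "\<dots> = (\<Sum>(p,w)\<leftarrow>ps. complex_of_real p * w$i * cnj (w$j))"
    using dim ij by (intro arg_cong[where f=sum_list] map_cong refl) auto
  finally show "\<rho>$$(i,j) = (\<Sum>(p,w)\<leftarrow>ps. complex_of_real p * w$i * cnj (w$j))" .
qed

lemma pure_decomp_density:
  assumes "pure_decomp n \<rho> ps"
  shows "density n \<rho>"
proof -
  note e = pure_decomp_entries[OF assms]
  have unit: "\<And>p w. (p,w) \<in> set ps \<Longrightarrow> dim_vec w = n \<and> vec_sq_norm w = 1"
    using assms by (auto simp: pure_decomp_def unit_vec_c_def vec_sq_norm_def)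
  have "psd n \<rho>"
    by (rule psd_of_rank_one_sum[OF e]) (use assms in \<open>auto simp: pure_decomp_def\<close>)
  moreover have "mtrace \<rho> = complex_of_real (\<Sum>(p,w)\<leftarrow>ps. p * vec_sq_norm w)"
    using unit by (intro mtrace_rank_one_sum[OF e]) auto
  moreover have "(\<Sum>(p,w)\<leftarrow>ps. p * vec_sq_norm w) = (\<Sum>(p,w)\<leftarrow>ps. p)"
    using unit by (intro arg_cong[where f=sum_list] map_cong refl) auto
  ultimately show ?thesis using assms by (simp add: density_def pure_decomp_def)
qed

text \<open>Zero terms are dropped and the remaining vectors normalized, their squared norms moving into
  the weights.\<close>
lemma pure_decomp_of_rank_one_sum:
  fixes ws :: "(real \<times> complex vec) list"
  assumes rc: "\<rho> \<in> carrier_mat n n"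
    and ent: "\<And>i j. i < n \<Longrightarrow> j < n \<Longrightarrow> \<rho>$$(i,j) = (\<Sum>(p,w)\<leftarrow>ws. complex_of_real p * w$i * cnj (w$j))"
    and tr: "mtrace \<rho> = 1"
    and pos: "\<And>p w. (p,w) \<in> set ws \<Longrightarrow> p \<ge> 0 \<and> dim_vec w = n"
    and Q: "\<And>p w. (p,w) \<in> set ws \<Longrightarrow> p > 0 \<Longrightarrow> vec_sq_norm w > 0 \<Longrightarrow> Q (vec_normalize w)"
  shows "\<exists>ps. pure_decomp n \<rho> ps \<and> (\<forall>(p,\<psi>)\<in>set ps. Q \<psi>)"
proof -
  define ws' where "ws' = filter (\<lambda>(p,w). p > 0 \<and> vec_sq_norm w > 0) ws"
  define ps where "ps = map (\<lambda>(p,w). (p * vec_sq_norm w, vec_normalize w)) ws'"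
  have ws': "\<And>p w. (p,w) \<in> set ws' \<Longrightarrow> (p,w) \<in> set ws \<and> p > 0 \<and> vec_sq_norm w > 0 \<and> dim_vec w = n"
    using pos by (auto simp: ws'_def)
  have ent': "\<rho>$$(i,j) = (\<Sum>(p,w)\<leftarrow>ws'. complex_of_real p * w$i * cnj (w$j))" if "i < n" "j < n" for i j
  proof -
    have "(\<Sum>(p,w)\<leftarrow>ws'. complex_of_real p * w$i * cnj (w$j))
        = (\<Sum>(p,w)\<leftarrow>ws. complex_of_real p * w$i * cnj (w$j))"
      unfolding ws'_def
    proof (rule sum_list_map_filter)
      fix x assume x: "x \<in> set ws" "\<not> (\<lambda>(p,w). p > 0 \<and> vec_sq_norm w > 0) x"
      obtain p w where pw: "x = (p,w)" by (cases x)
      have "p = 0 \<or> vec_sq_norm w = 0"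
        using x pos[of p w] vec_sq_norm_nonneg[of w] unfolding pw by auto
      then show "(\<lambda>(p,w). complex_of_real p * w$i * cnj (w$j)) x = 0"
        using vec_sq_norm_eq_0[of w] pos[of p w] x that unfolding pw by auto
    qed
    then show ?thesis using ent[OF that] by simp
  qed
  have ent_ps: "(\<Sum>(p,w)\<leftarrow>ps. complex_of_real p * w$i * cnj (w$j))
      = (\<Sum>(p,w)\<leftarrow>ws'. complex_of_real p * w$i * cnj (w$j))" if "i < n" "j < n" for i j
    unfolding ps_def map_map
  proof (intro arg_cong[where f=sum_list] map_cong refl)
    fix x assume "x \<in> set ws'"
    moreover obtain p w where x: "x = (p,w)" by (cases x)
    ultimately have "vec_sq_norm w > 0" "dim_vec w = n" using ws' by auto
    then show "((\<lambda>(p,w). complex_of_real p * w$i * cnj (w$j)) \<circ> (\<lambda>(p,w). (p * vec_sq_norm w, vec_normalize w))) x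
        = (\<lambda>(p,w). complex_of_real p * w$i * cnj (w$j)) x"
      using rank_one_vec_normalize[of w i j p] x that by simp
  qed
  have "mtrace \<rho> = complex_of_real (\<Sum>(p,w)\<leftarrow>ws'. p * vec_sq_norm w)"
    using ws' by (intro mtrace_rank_one_sum[OF rc ent']) auto
  moreover have "(\<Sum>(p,\<psi>)\<leftarrow>ps. p) = (\<Sum>(p,w)\<leftarrow>ws'. p * vec_sq_norm w)"
    unfolding ps_def map_map by (intro arg_cong[where f=sum_list] map_cong refl) auto
  ultimately have wsum: "(\<Sum>(p,\<psi>)\<leftarrow>ps. p) = 1"
    using tr by simp
  have props: "\<forall>(p,\<psi>)\<in>set ps. p > 0 \<and> unit_vec_c n \<psi>"
    using ws' unit_vec_normalize unfolding ps_def by fastforce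
  have "pure_decomp n (msum n (\<lambda>(p,\<psi>). complex_of_real p \<cdot>\<^sub>m proj \<psi>) ps) ps"
    using props wsum by (auto simp: pure_decomp_def)
  from pure_decomp_entries[OF this]
  have "\<rho> = msum n (\<lambda>(p,\<psi>). complex_of_real p \<cdot>\<^sub>m proj \<psi>) ps"
    by (intro eq_matI) (use rc ent' ent_ps in auto)
  moreover have "\<forall>(p,\<psi>)\<in>set ps. Q \<psi>"
    using Q ws' unfolding ps_def by fastforce
  ultimately show ?thesis
    using props wsum by (intro exI[of _ ps]) (auto simp: pure_decomp_def)
qed

lemma density_has_pure_decomp:
  assumes "density n \<rho>"
  shows "\<exists>ps. pure_decomp n \<rho> ps"
proof -
  from assms have "psd n \<rho>" by (simp add: density_def)
  then obtain vs where vs: "\<forall>v\<in>set vs. dim_vec v = n"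
    "\<forall>i<n. \<forall>j<n. \<rho>$$(i,j) = (\<Sum>v\<leftarrow>vs. v$i * cnj (v$j))"
    using psd_rank_one_decomposition by blast
  have "\<exists>ps. pure_decomp n \<rho> ps \<and> (\<forall>(p,\<psi>)\<in>set ps. True)"
    by (rule pure_decomp_of_rank_one_sum[where ws="map (\<lambda>v. (1::real, v)) vs"])
       (use assms vs in \<open>auto simp: density_def psd_iff_quad_form o_def\<close>)
  then show ?thesis by auto
qed

section \<open>Kraus maps\<close>

text \<open>\<open>K l i a\<close> is the entry \<open>(i,a)\<close> of the \<open>l\<close>-th Kraus operator, an \<open>m \<times> n\<close> matrix.\<close>
definition kraus_map ::
    "nat \<Rightarrow> nat \<Rightarrow> (nat \<Rightarrow> nat \<Rightarrow> nat \<Rightarrow> complex) \<Rightarrow> nat set \<Rightarrow> complex mat \<Rightarrow> complex mat" where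
  "kraus_map n m K L X = mat m m (\<lambda>(i,j). \<Sum>l\<in>L. \<Sum>a<n. \<Sum>b<n. K l i a * X$$(a,b) * cnj (K l j b))"

definition kraus_trace_preserving ::
    "nat \<Rightarrow> nat \<Rightarrow> (nat \<Rightarrow> nat \<Rightarrow> nat \<Rightarrow> complex) \<Rightarrow> nat set \<Rightarrow> bool" where
  "kraus_trace_preserving n m K L \<longleftrightarrow>
     (\<forall>a<n. \<forall>b<n. (\<Sum>l\<in>L. \<Sum>r<m. cnj (K l r b) * K l r a) = (if a = b then 1 else 0))"

lemma kraus_map_carrier_mat[simp]: "kraus_map n m K L X \<in> carrier_mat m m"
  by (simp add: kraus_map_def)

lemma dim_kraus_map[simp]: "dim_row (kraus_map n m K L X) = m" "dim_col (kraus_map n m K L X) = m"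
  by (simp_all add: kraus_map_def)

lemma index_kraus_map:
  "i < m \<Longrightarrow> j < m \<Longrightarrow>
   kraus_map n m K L X $$ (i,j) = (\<Sum>l\<in>L. \<Sum>a<n. \<Sum>b<n. K l i a * X$$(a,b) * cnj (K l j b))"
  by (simp add: kraus_map_def)

lemma kraus_map_cong:
  assumes "\<And>l i a. l \<in> L \<Longrightarrow> i < m \<Longrightarrow> a < n \<Longrightarrow> K l i a = K' l i a"
  shows "kraus_map n m K L X = kraus_map n m K' L X"
  using assms by (intro eq_matI) (auto simp: kraus_map_def)

lemma quad_form_kraus_map:
  "quad_form m (kraus_map n m K L X) u = (\<Sum>l\<in>L. quad_form n X (vec n (\<lambda>c. \<Sum>j<m. cnj (K l j c) * u$j)))"
proof -
  have "quad_form m (kraus_map n m K L X) u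
      = (\<Sum>i<m. \<Sum>j<m. \<Sum>l\<in>L. cnj (u$i) * (\<Sum>a<n. \<Sum>b<n. K l i a * X$$(a,b) * cnj (K l j b)) * u$j)"
    unfolding quad_form_def
    by (intro sum.cong refl) (simp add: index_kraus_map sum_distrib_left sum_distrib_right)
  also have "\<dots> = (\<Sum>l\<in>L. \<Sum>i<m. \<Sum>j<m. cnj (u$i) * (\<Sum>a<n. \<Sum>b<n. K l i a * X$$(a,b) * cnj (K l j b)) * u$j)"
    by (subst sum.swap, rule sum.cong[OF refl], rule sum.swap)
  also have "\<dots> = (\<Sum>l\<in>L. quad_form n X (vec n (\<lambda>c. \<Sum>j<m. cnj (K l j c) * u$j)))"
  proof (rule sum.cong[OF refl])
    fix l
    have "(\<Sum>i<m. \<Sum>j<m. cnj (u$i) * (\<Sum>a<n. \<Sum>b<n. K l i a * X$$(a,b) * cnj (K l j b)) * u$j)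
        = (\<Sum>i<m. \<Sum>j<m. \<Sum>a<n. \<Sum>b<n. (cnj (u$i) * K l i a) * X$$(a,b) * (cnj (K l j b) * u$j))"
      by (simp add: sum_distrib_left sum_distrib_right mult_ac)
    also have "\<dots> = (\<Sum>a<n. \<Sum>b<n. \<Sum>i<m. \<Sum>j<m. (cnj (u$i) * K l i a) * X$$(a,b) * (cnj (K l j b) * u$j))"
      by (rule sum_swap4)
    also have "\<dots> = (\<Sum>a<n. \<Sum>b<n. (\<Sum>i<m. cnj (u$i) * K l i a) * X$$(a,b) * (\<Sum>j<m. cnj (K l j b) * u$j))"
      by (simp add: sum_distrib_left sum_distrib_right mult_ac)
    also have "\<dots> = quad_form n X (vec n (\<lambda>c. \<Sum>j<m. cnj (K l j c) * u$j))"
      unfolding quad_form_def by (intro sum.cong refl) (simp add: mult.commute)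
    finally show "(\<Sum>i<m. \<Sum>j<m. cnj (u$i) * (\<Sum>a<n. \<Sum>b<n. K l i a * X$$(a,b) * cnj (K l j b)) * u$j)
        = quad_form n X (vec n (\<lambda>c. \<Sum>j<m. cnj (K l j c) * u$j))" .
  qed
  finally show ?thesis .
qed

lemma psd_kraus_map:
  assumes "psd n X"
  shows "psd m (kraus_map n m K L X)"
proof -
  have "Im (quad_form n X v) = 0 \<and> Re (quad_form n X v) \<ge> 0" if "dim_vec v = n" for v
    using assms that by (simp add: psd_iff_quad_form)
  then show ?thesis
    by (simp add: psd_iff_quad_form quad_form_kraus_map Im_sum Re_sum sum_nonneg)
qed

lemma mtrace_kraus_map:
  assumes X: "X \<in> carrier_mat n n" and tp: "kraus_trace_preserving n m K L"
  shows "mtrace (kraus_map n m K L X) = mtrace X"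
proof -
  have "mtrace (kraus_map n m K L X) = (\<Sum>i<m. \<Sum>l\<in>L. \<Sum>a<n. \<Sum>b<n. K l i a * X$$(a,b) * cnj (K l i b))"
    by (simp add: mtrace_def index_kraus_map)
  also have "\<dots> = (\<Sum>a<n. \<Sum>b<n. \<Sum>i<m. \<Sum>l\<in>L. K l i a * X$$(a,b) * cnj (K l i b))"
    by (rule sum_swap4)
  also have "\<dots> = (\<Sum>a<n. \<Sum>b<n. X$$(a,b) * (\<Sum>l\<in>L. \<Sum>i<m. cnj (K l i b) * K l i a))"
    by (subst (2) sum.swap) (simp add: sum_distrib_left mult_ac)
  also have "\<dots> = (\<Sum>a<n. \<Sum>b<n. if b = a then X$$(a,b) else 0)"
    using tp by (intro sum.cong refl) (auto simp: kraus_trace_preserving_def)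
  also have "\<dots> = mtrace X" using X by (simp add: mtrace_def)
  finally show ?thesis .
qed

lemma kraus_map_linear:
  assumes "X \<in> carrier_mat n n" "Y \<in> carrier_mat n n"
  shows "kraus_map n m K L (c \<cdot>\<^sub>m X + Y) = c \<cdot>\<^sub>m kraus_map n m K L X + kraus_map n m K L Y"
proof (rule eq_matI)
  fix i j assume "i < dim_row (c \<cdot>\<^sub>m kraus_map n m K L X + kraus_map n m K L Y)"
    "j < dim_col (c \<cdot>\<^sub>m kraus_map n m K L X + kraus_map n m K L Y)"
  then have ij: "i < m" "j < m" by auto
  have "K l i a * (c \<cdot>\<^sub>m X + Y)$$(a,b) * cnj (K l j b)
      = c * (K l i a * X$$(a,b) * cnj (K l j b)) + K l i a * Y$$(a,b) * cnj (K l j b)"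
    if "a < n" "b < n" for l a b
    using assms that by (simp add: algebra_simps)
  then show "kraus_map n m K L (c \<cdot>\<^sub>m X + Y) $$ (i,j) = (c \<cdot>\<^sub>m kraus_map n m K L X + kraus_map n m K L Y) $$ (i,j)"
    using ij by (simp add: index_kraus_map sum.distrib sum_distrib_left)
qed auto

text \<open>Kraus operators \<open>1\<^sub>k \<otimes> K\<^sub>l\<close> of \<open>id\<^sub>k \<otimes> \<Phi>\<close>.\<close>
definition kraus_ampliation ::
    "nat \<Rightarrow> nat \<Rightarrow> (nat \<Rightarrow> nat \<Rightarrow> nat \<Rightarrow> complex) \<Rightarrow> nat \<Rightarrow> nat \<Rightarrow> nat \<Rightarrow> complex" where
  "kraus_ampliation n m K l i c = (if i div m = c div n then K l (i mod m) (c mod n) else 0)"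

lemma kraus_ampliation_entry:
  assumes i: "i < k*m" and j: "j < k*m"
  shows "(\<Sum>a<k*n. \<Sum>b<k*n. kraus_ampliation n m K l i a * X$$(a,b) * cnj (kraus_ampliation n m K l j b)) =
         (\<Sum>a<n. \<Sum>b<n. K l (i mod m) a * X$$((i div m)*n + a, (j div m)*n + b) * cnj (K l (j mod m) b))"
proof -
  let ?K = "kraus_ampliation n m K l"
  have im: "i div m < k" using i by (simp add: less_mult_imp_div_less)
  have jm: "j div m < k" using j by (simp add: less_mult_imp_div_less)
  have inner: "(\<Sum>b<k*n. ?K i a * X$$(a,b) * cnj (?K j b)) =
     (\<Sum>b<n. ?K i a * X$$(a,(j div m)*n + b) * cnj (K l (j mod m) b))" for a
  proof -
    have "(\<Sum>b<k*n. ?K i a * X$$(a,b) * cnj (?K j b)) =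
       (\<Sum>Q<k. \<Sum>b<n. ?K i a * X$$(a,Q*n+b) * cnj (?K j (Q*n+b)))"
      by (rule sum_lessThan_mult)
    also have "\<dots> = (\<Sum>b<n. ?K i a * X$$(a,(j div m)*n+b) * cnj (?K j ((j div m)*n+b)))"
      by (rule sum_lessThan_single[OF jm]) (auto intro!: sum.neutral simp: kraus_ampliation_def)
    finally show ?thesis by (simp add: kraus_ampliation_def)
  qed
  have "(\<Sum>a<k*n. \<Sum>b<k*n. ?K i a * X$$(a,b) * cnj (?K j b)) =
     (\<Sum>a<k*n. \<Sum>b<n. ?K i a * X$$(a,(j div m)*n + b) * cnj (K l (j mod m) b))"
    by (simp only: inner)
  also have "\<dots> = (\<Sum>P<k. \<Sum>a<n. \<Sum>b<n. ?K i (P*n+a) * X$$(P*n+a,(j div m)*n + b) * cnj (K l (j mod m) b))"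
    by (rule sum_lessThan_mult)
  also have "\<dots> = (\<Sum>a<n. \<Sum>b<n. ?K i ((i div m)*n+a) * X$$((i div m)*n+a,(j div m)*n + b) * cnj (K l (j mod m) b))"
    by (rule sum_lessThan_single[OF im]) (auto intro!: sum.neutral simp: kraus_ampliation_def)
  finally show ?thesis by (simp add: kraus_ampliation_def)
qed

lemma id_tensor_kraus_map:
  "id_tensor k n m (kraus_map n m K L) X = kraus_map (k*n) (k*m) (kraus_ampliation n m K) L X"
proof (rule eq_matI)
  fix i j assume "i < dim_row (kraus_map (k*n) (k*m) (kraus_ampliation n m K) L X)"
    "j < dim_col (kraus_map (k*n) (k*m) (kraus_ampliation n m K) L X)"
  then have ij: "i < k*m" "j < k*m" by auto
  then have m: "0 < m" by (cases m) auto
  have "id_tensor k n m (kraus_map n m K L) X $$ (i,j)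
      = kraus_map n m K L (block n X (i div m) (j div m)) $$ (i mod m, j mod m)"
    using ij by (simp add: id_tensor_def)
  also have "\<dots> = (\<Sum>l\<in>L. \<Sum>a<n. \<Sum>b<n.
      K l (i mod m) a * X$$((i div m)*n + a, (j div m)*n + b) * cnj (K l (j mod m) b))"
    using m by (simp add: index_kraus_map block_def)
  also have "\<dots> = kraus_map (k*n) (k*m) (kraus_ampliation n m K) L X $$ (i,j)"
    using ij by (simp add: index_kraus_map kraus_ampliation_entry)
  finally show "id_tensor k n m (kraus_map n m K L) X $$ (i,j)
      = kraus_map (k*n) (k*m) (kraus_ampliation n m K) L X $$ (i,j)" .
qed (auto simp: id_tensor_def)

lemma cptp_kraus_map:
  assumes "kraus_trace_preserving n m K L"
  shows "cptp n m (kraus_map n m K L)"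
  unfolding cptp_def
  using kraus_map_linear mtrace_kraus_map[OF _ assms] psd_kraus_map id_tensor_kraus_map by auto

lemma cptp_cong:
  assumes "\<And>X. X \<in> carrier_mat n n \<Longrightarrow> \<Phi> X = \<Psi> X" "cptp n m \<Psi>"
  shows "cptp n m \<Phi>"
proof -
  have "block n X a b \<in> carrier_mat n n" for X a b by (simp add: block_def)
  then have "id_tensor k n m \<Phi> X = id_tensor k n m \<Psi> X" for k X
    unfolding id_tensor_def using assms(1) by simp
  moreover have "c \<cdot>\<^sub>m X + Y \<in> carrier_mat n n" if "X \<in> carrier_mat n n" "Y \<in> carrier_mat n n" for X Y c
    using that by auto
  ultimately show ?thesis using assms unfolding cptp_def by simp
qed

lemma cptp_density:
  assumes \<Phi>: "cptp n m \<Phi>" and X: "density n X"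
  shows "density m (\<Phi> X)"
proof -
  have Xc: "X \<in> carrier_mat n n" using X by (simp add: density_def psd_carrier_mat)
  then have \<Phi>X: "\<Phi> X \<in> carrier_mat m m" using \<Phi> by (simp add: cptp_def)
  have "block n X 0 0 = X" using Xc by (intro eq_matI) (auto simp: block_def)
  then have "id_tensor 1 n m \<Phi> X = \<Phi> X"
    using \<Phi>X by (intro eq_matI) (auto simp: id_tensor_def)
  moreover have "psd (1*n) X" using X by (simp add: density_def)
  then have "psd (1*m) (id_tensor 1 n m \<Phi> X)"
    using \<Phi> unfolding cptp_def by blast
  moreover have "mtrace (\<Phi> X) = mtrace X" using \<Phi> Xc by (simp add: cptp_def)
  ultimately show ?thesis using X by (simp add: density_def)
qed

lemma kraus_map_comp:
  assumes "X \<in> carrier_mat n1 n1"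
  shows "kraus_map n2 n3 K2 L (kraus_map n1 n2 K1 {0} X)
    = kraus_map n1 n3 (\<lambda>l i a. \<Sum>c<n2. K2 l i c * K1 0 c a) L X"
proof (rule eq_matI)
  fix i j assume "i < dim_row (kraus_map n1 n3 (\<lambda>l i a. \<Sum>c<n2. K2 l i c * K1 0 c a) L X)"
     "j < dim_col (kraus_map n1 n3 (\<lambda>l i a. \<Sum>c<n2. K2 l i c * K1 0 c a) L X)"
  then have ij: "i < n3" "j < n3" by auto
  have "(\<Sum>c<n2. \<Sum>e<n2. K2 l i c * (\<Sum>a<n1. \<Sum>b<n1. K1 0 c a * X$$(a,b) * cnj (K1 0 e b)) * cnj (K2 l j e))
      = (\<Sum>a<n1. \<Sum>b<n1. (\<Sum>c<n2. K2 l i c * K1 0 c a) * X$$(a,b) * cnj (\<Sum>c<n2. K2 l j c * K1 0 c b))"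
    for l
  proof -
    have "(\<Sum>c<n2. \<Sum>e<n2. K2 l i c * (\<Sum>a<n1. \<Sum>b<n1. K1 0 c a * X$$(a,b) * cnj (K1 0 e b)) * cnj (K2 l j e))
       = (\<Sum>c<n2. \<Sum>e<n2. \<Sum>a<n1. \<Sum>b<n1. (K2 l i c * K1 0 c a) * X$$(a,b) * (cnj (K2 l j e) * cnj (K1 0 e b)))"
      by (simp add: sum_distrib_left sum_distrib_right mult_ac)
    also have "\<dots> = (\<Sum>a<n1. \<Sum>b<n1. \<Sum>c<n2. \<Sum>e<n2. (K2 l i c * K1 0 c a) * X$$(a,b) * (cnj (K2 l j e) * cnj (K1 0 e b)))"
      by (rule sum_swap4)
    finally show ?thesis by (simp add: sum_distrib_left sum_distrib_right mult_ac)
  qed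
  then show "kraus_map n2 n3 K2 L (kraus_map n1 n2 K1 {0} X) $$ (i,j)
      = kraus_map n1 n3 (\<lambda>l i a. \<Sum>c<n2. K2 l i c * K1 0 c a) L X $$ (i,j)"
    using ij by (simp add: index_kraus_map)
qed auto

lemma sum_list_map_concat:
  "sum_list (map f (concat xss)) = sum_list (map (\<lambda>xs. sum_list (map f xs)) xss)"
  by (induction xss) auto

definition kraus_apply ::
    "nat \<Rightarrow> nat \<Rightarrow> (nat \<Rightarrow> nat \<Rightarrow> nat \<Rightarrow> complex) \<Rightarrow> nat \<Rightarrow> complex vec \<Rightarrow> complex vec" where
  "kraus_apply n m K l \<psi> = vec m (\<lambda>i. \<Sum>a<n. K l i a * \<psi>$a)"

lemma sandwich_rank_one_sum:
  "(\<Sum>a<n. \<Sum>b<n. Ki a * (\<Sum>(p,\<psi>)\<leftarrow>ps. complex_of_real p * \<psi>$a * cnj (\<psi>$b)) * cnj (Kj b)) =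
   (\<Sum>(p,\<psi>)\<leftarrow>ps. complex_of_real p * (\<Sum>a<n. Ki a * \<psi>$a) * cnj (\<Sum>b<n. Kj b * \<psi>$b))"
proof (induction ps)
  case Nil
  then show ?case by simp
next
  case (Cons x ps)
  obtain p \<psi> where x: "x = (p,\<psi>)" by (cases x)
  have "(\<Sum>a<n. \<Sum>b<n. Ki a * (complex_of_real p * \<psi>$a * cnj (\<psi>$b)) * cnj (Kj b))
      = complex_of_real p * (\<Sum>a<n. \<Sum>b<n. (Ki a * \<psi>$a) * (cnj (Kj b) * cnj (\<psi>$b)))"
    by (simp add: sum_distrib_left mult_ac)
  also have "(\<Sum>a<n. \<Sum>b<n. (Ki a * \<psi>$a) * (cnj (Kj b) * cnj (\<psi>$b)))
      = (\<Sum>a<n. Ki a * \<psi>$a) * (\<Sum>b<n. cnj (Kj b) * cnj (\<psi>$b))"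
    by (rule sum_product[symmetric])
  finally show ?case
    using Cons.IH by (simp add: x ring_distribs sum.distrib mult.assoc)
qed

text \<open>The normalized nonzero vectors \<open>K\<^sub>l \<psi>\<close> form a pure-state decomposition of the image.\<close>
lemma kraus_map_pure_decomp:
  assumes pd: "pure_decomp n \<sigma> ps" and tp: "kraus_trace_preserving n m K (set ls)"
    and dl: "distinct ls"
    and Q: "\<And>l p \<psi>. l \<in> set ls \<Longrightarrow> (p,\<psi>) \<in> set ps \<Longrightarrow> vec_sq_norm (kraus_apply n m K l \<psi>) > 0
              \<Longrightarrow> Q (vec_normalize (kraus_apply n m K l \<psi>))"
  shows "\<exists>ps'. pure_decomp m (kraus_map n m K (set ls) \<sigma>) ps' \<and> (\<forall>(p,\<psi>)\<in>set ps'. Q \<psi>)"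
proof -
  define ws where "ws = concat (map (\<lambda>l. map (\<lambda>(p,\<psi>). (p, kraus_apply n m K l \<psi>)) ps) ls)"
  note e = pure_decomp_entries[OF pd]
  have "density m (kraus_map n m K (set ls) \<sigma>)"
    using cptp_density[OF cptp_kraus_map[OF tp] pure_decomp_density[OF pd]] .
  then have tr: "mtrace (kraus_map n m K (set ls) \<sigma>) = 1" by (simp add: density_def)
  have ent: "kraus_map n m K (set ls) \<sigma> $$ (i,j) = (\<Sum>(p,w)\<leftarrow>ws. complex_of_real p * w$i * cnj (w$j))"
    if ij: "i < m" "j < m" for i j
  proof -
    have "kraus_map n m K (set ls) \<sigma> $$ (i,j) = (\<Sum>l\<in>set ls. \<Sum>a<n. \<Sum>b<n.
        K l i a * (\<Sum>(p,\<psi>)\<leftarrow>ps. complex_of_real p * \<psi>$a * cnj (\<psi>$b)) * cnj (K l j b))"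
      using ij e(2) by (simp add: index_kraus_map)
    also have "\<dots> = (\<Sum>l\<leftarrow>ls. \<Sum>(p,\<psi>)\<leftarrow>ps.
        complex_of_real p * (\<Sum>a<n. K l i a * \<psi>$a) * cnj (\<Sum>b<n. K l j b * \<psi>$b))"
      using dl by (simp add: sandwich_rank_one_sum sum_list_distinct_conv_sum_set)
    also have "\<dots> = (\<Sum>(p,w)\<leftarrow>ws. complex_of_real p * w$i * cnj (w$j))"
      unfolding ws_def using ij
      by (simp add: sum_list_map_concat o_def case_prod_unfold kraus_apply_def)
    finally show ?thesis .
  qed
  have ws: "\<exists>l \<psi>. l \<in> set ls \<and> (p,\<psi>) \<in> set ps \<and> w = kraus_apply n m K l \<psi>"
    if "(p,w) \<in> set ws" for p w
    using that unfolding ws_def by auto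
  show ?thesis
  proof (rule pure_decomp_of_rank_one_sum[OF _ ent tr])
    fix p w assume "(p,w) \<in> set ws"
    then obtain l \<psi> where "(p,\<psi>) \<in> set ps" "w = kraus_apply n m K l \<psi>" using ws by blast
    then show "p \<ge> 0 \<and> dim_vec w = m" using pd by (auto simp: pure_decomp_def kraus_apply_def)
  next
    fix p w assume "(p,w) \<in> set ws" "vec_sq_norm w > 0"
    then show "Q (vec_normalize w)" using Q ws by blast
  qed simp_all
qed

section \<open>Producibility from the support\<close>

lemma digit_Cons_Suc: "digit (d#ds) x (Suc i) = digit ds x i"
  by (simp add: digit_def)

lemma digit_Cons_0: "digit (d#ds) x 0 = (x div prod_list ds) mod d"
  by (simp add: digit_def)

lemma prod_list_drop_nth_dvd:
  assumes "i < length (ds::nat list)"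
  shows "prod_list (drop (Suc i) ds) * (ds ! i) dvd prod_list ds"
proof -
  have "ds = take i ds @ (ds ! i) # drop (Suc i) ds" using assms by (simp add: id_take_nth_drop)
  then have "prod_list ds = prod_list (take i ds) * (prod_list (drop (Suc i) ds) * ds ! i)"
    by (metis prod_list.Cons prod_list.append mult.commute)
  then show ?thesis by simp
qed

lemma digit_mod_prod_list:
  assumes "i < length ds"
  shows "digit ds (x mod prod_list ds) i = digit ds x i"
proof -
  define Q where "Q = prod_list (drop (Suc i) ds)"
  define r where "r = ds ! i"
  obtain R where R: "prod_list ds = Q * r * R"
    using prod_list_drop_nth_dvd[OF assms] unfolding Q_def r_def by (auto elim: dvdE)
  have "(x mod (Q * (r * R))) div Q = x div Q mod (r * R)"
    by (cases "Q = 0") (simp_all add: mod_mult2_eq)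
  then have "(x mod prod_list ds) div Q mod r = x div Q mod (r*R) mod r" by (simp add: R mult.assoc)
  also have "\<dots> = x div Q mod r" by (simp add: mod_mod_cancel)
  finally show ?thesis by (simp add: digit_def Q_def r_def)
qed

lemma digit_inject:
  "x < prod_list dims \<Longrightarrow> y < prod_list dims \<Longrightarrow>
   (\<And>i. i < length dims \<Longrightarrow> digit dims x i = digit dims y i) \<Longrightarrow> x = y"
proof (induction dims arbitrary: x y)
  case Nil
  then show ?case by simp
next
  case (Cons d ds)
  define P where "P = prod_list ds"
  have "(x div P) mod d = (y div P) mod d" using Cons.prems(3)[of 0] by (simp add: digit_Cons_0 P_def)
  moreover have "x div P < d" "y div P < d" using Cons.prems(1,2) unfolding P_def
    by (simp_all add: less_mult_imp_div_less mult.commute)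
  ultimately have "x div P = y div P" by simp
  moreover have "x mod P = y mod P"
  proof (cases "P = 0")
    case True
    then show ?thesis using Cons.prems(1) by (simp add: P_def)
  next
    case False
    show ?thesis unfolding P_def
    proof (rule Cons.IH)
      show "x mod prod_list ds < prod_list ds" "y mod prod_list ds < prod_list ds"
        using False by (simp_all add: P_def)
      fix i assume "i < length ds"
      then show "digit ds (x mod prod_list ds) i = digit ds (y mod prod_list ds) i"
        using Cons.prems(3)[of "Suc i"] by (simp add: digit_mod_prod_list digit_Cons_Suc)
    qed
  qed
  ultimately show ?case by (metis div_mult_mod_eq)
qed

lemma k_partition_insert_singletons:
  assumes "B \<subseteq> {..<N}" "B \<noteq> {}" "card B \<le> k" "1 \<le> k"
  shows "k_partition N k (insert B ((\<lambda>j. {j}) ` ({..<N} - B)))"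
  using assms unfolding k_partition_def by auto

text \<open>A vector whose support only involves the basis states that are \<open>|0\<rangle>\<close> on every party outside
  \<open>B\<close> is the product of its restriction to \<open>B\<close> with \<open>|0\<rangle>\<close> on each remaining party.\<close>
lemma k_producible_pure_of_support:
  assumes w: "unit_vec_c (prod_list dims) w"
    and B: "B \<subseteq> {..<length dims}" "B \<noteq> {}" "card B \<le> k" "1 \<le> k"
    and supp: "\<And>x j. x < prod_list dims \<Longrightarrow> w$x \<noteq> 0 \<Longrightarrow> j < length dims \<Longrightarrow> j \<notin> B \<Longrightarrow> digit dims x j = 0"
  shows "k_producible_pure dims k w"
proof -
  define N where "N = prod_list dims"
  define J where "J = {..<length dims} - B"
  define P where "P = insert B ((\<lambda>j. {j}) ` J)"
  define \<phi> where "\<phi> = (\<lambda>C (f::nat\<Rightarrow>nat). if C = B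
      then (\<Sum>x\<in>{x. x < N \<and> (\<forall>j<length dims. digit dims x j = (if j \<in> B then f j else 0))}. w$x)
      else (if f (the_elem C) = 0 then 1 else (0::complex)))"
  have "w $ x = (\<Prod>C\<in>P. \<phi> C (\<lambda>j. if j \<in> C then digit dims x j else 0))" if x: "x < N" for x
  proof -
    have "B \<notin> (\<lambda>j. {j}) ` J" using B(2) by (auto simp: J_def)
    then have "(\<Prod>C\<in>P. \<phi> C (\<lambda>j. if j \<in> C then digit dims x j else 0))
       = \<phi> B (\<lambda>j. if j \<in> B then digit dims x j else 0)
         * (\<Prod>C\<in>(\<lambda>j. {j}) ` J. \<phi> C (\<lambda>j. if j \<in> C then digit dims x j else 0))"
      unfolding P_def by (simp add: J_def)
    also have "(\<Prod>C\<in>(\<lambda>j. {j}) ` J. \<phi> C (\<lambda>j. if j \<in> C then digit dims x j else 0))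
        = (\<Prod>j\<in>J. if digit dims x j = 0 then 1 else 0)"
      by (subst prod.reindex) (auto simp: inj_on_def \<phi>_def J_def intro!: prod.cong)
    finally have eq: "(\<Prod>C\<in>P. \<phi> C (\<lambda>j. if j \<in> C then digit dims x j else 0))
       = \<phi> B (\<lambda>j. if j \<in> B then digit dims x j else 0) * (\<Prod>j\<in>J. if digit dims x j = 0 then 1 else 0)" .
    show ?thesis
    proof (cases "\<forall>j\<in>J. digit dims x j = 0")
      case True
      have "y = x" if "y < N" "\<forall>j<length dims. digit dims y j = (if j \<in> B then digit dims x j else 0)" for y
      proof (rule digit_inject)
        show "y < prod_list dims" "x < prod_list dims" using that x by (auto simp: N_def)
        show "digit dims y j = digit dims x j" if "j < length dims" for j
          using that \<open>\<forall>j<length dims. _\<close> True by (auto simp: J_def)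
      qed
      moreover have "digit dims x j = (if j \<in> B then digit dims x j else 0)" if "j < length dims" for j
        using True that by (auto simp: J_def)
      ultimately have "{y. y < N \<and> (\<forall>j<length dims. digit dims y j = (if j \<in> B then digit dims x j else 0))} = {x}"
        using x by blast
      then have "\<phi> B (\<lambda>j. if j \<in> B then digit dims x j else 0) = w$x"
        unfolding \<phi>_def by (simp cong: if_cong)
      then show ?thesis using eq True by simp
    next
      case False
      then obtain j where j: "j \<in> J" "digit dims x j \<noteq> 0" by auto
      have "(\<Prod>j\<in>J. if digit dims x j = 0 then 1 else (0::complex)) = 0"
        using j by (intro prod_zero) (auto simp: J_def)
      moreover have "w$x = 0" using supp[of x j] x j by (auto simp: N_def J_def)
      ultimately show ?thesis using eq by simp
    qed
  qed
  moreover have "k_partition (length dims) k P"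
    unfolding P_def J_def using B by (rule k_partition_insert_singletons)
  ultimately show ?thesis
    using w unfolding k_producible_pure_def N_def by blast
qed

section \<open>Kraus operators of \<open>\<rho> \<mapsto> \<rho>'\<close>\<close>

lemma block_offset_less:
  assumes "a < d" "x < (N::nat)"
  shows "a * N + x < d * N"
proof -
  have "a * N + x < (a + 1) * N" using assms by simp
  also have "\<dots> \<le> d * N" using assms by (intro mult_le_mono1) simp
  finally show ?thesis .
qed

lemma two_pow_less: "a < d \<Longrightarrow> (2::nat)^(d - Suc a) < 2^d"
  by (simp add: power_strict_increasing_iff)

lemma index_kron_one_left_col0:
  assumes "y < p * dim_row B" "0 < dim_col B"
  shows "kron (1\<^sub>m p) B $$ (y,0) = (if y < dim_row B then B $$ (y,0) else 0)"
proof -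
  have "y div dim_row B < p" using assms(1) by (simp add: less_mult_imp_div_less)
  then show ?thesis using assms by (auto simp: index_kron div_eq_0_iff)
qed

lemma index_kron_one_right_col0:
  assumes "y < dim_row A * q" "0 < dim_col A"
  shows "kron A (1\<^sub>m q) $$ (y,0) = (if y mod q = 0 then A $$ (y div q, 0) else 0)"
proof -
  have "0 < q" using assms(1) by (cases q) auto
  then show ?thesis using assms by (auto simp: index_kron)
qed

lemma dim_sigma_x[simp]: "dim_row sigma_x = 2" "dim_col sigma_x = 2"
  by (simp_all add: sigma_x_def)

lemma two_pow_split: "a < d \<Longrightarrow> (2::nat)^a * (2 * 2^(d - Suc a)) = 2^d"
  by (simp flip: power_Suc power_add)

text \<open>\<open>\<sigma>\<^sub>x\<close> on qubit \<open>a\<close> (counted from the most significant one) of \<open>d\<close> qubits.\<close>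
definition flip_qubit :: "nat \<Rightarrow> nat \<Rightarrow> complex mat" where
  "flip_qubit d a = kron (1\<^sub>m (2^a)) (kron sigma_x (1\<^sub>m (2^(d - Suc a))))"

lemma U_A_eq_msum_flip_qubit:
  "U_A d = msum (d * 2^d) (\<lambda>i. kron (ketbra d i i) (flip_qubit d i)) [0..<d]"
  by (simp add: U_A_def flip_qubit_def)

lemma dim_flip_qubit[simp]:
  "a < d \<Longrightarrow> dim_row (flip_qubit d a) = 2^d" "a < d \<Longrightarrow> dim_col (flip_qubit d a) = 2^d"
  using two_pow_split[of a d] by (simp_all add: flip_qubit_def)

lemma flip_qubit_col0:
  assumes a: "a < d" and y: "y < 2^d"
  shows "flip_qubit d a $$ (y, 0) = (if y = 2^(d - Suc a) then 1 else 0)"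
proof -
  define e where "e = d - Suc a"
  have y': "y < 2^a * dim_row (kron sigma_x (1\<^sub>m (2^e)))"
    using y two_pow_split[OF a] by (simp add: e_def)
  have "flip_qubit d a $$ (y, 0)
      = (if y < 2 * 2^e then (if y mod 2^e = 0 then sigma_x $$ (y div 2^e, 0) else 0) else 0)"
    unfolding flip_qubit_def e_def[symmetric]
    by (simp add: index_kron_one_left_col0[OF y'] index_kron_one_right_col0)
  also have "\<dots> = (if y = 2^e then 1 else 0)"
  proof -
    have "y = 2^e" if "y mod 2^e = 0" "y div 2^e = 1"
      using div_mult_mod_eq[of y "2^e"] that by simp
    moreover have "y div 2^e < 2" if "y < 2 * 2^e"
      using that by (simp add: less_mult_imp_div_less)
    ultimately show ?thesis
      by (auto simp: sigma_x_def less_2_cases_iff)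
  qed
  finally show ?thesis by (simp add: e_def)
qed

lemma U_A_carrier_mat: "U_A d \<in> carrier_mat (d * 2^d) (d * 2^d)"
  unfolding U_A_eq_msum_flip_qubit by (rule msum_carrier_mat) auto

lemma dim_U_A[simp]: "dim_row (U_A d) = d * 2^d" "dim_col (U_A d) = d * 2^d"
  using U_A_carrier_mat[of d] by auto

lemma U_A_col_basis:
  assumes a: "a < d" and r: "r < d * 2^d"
  shows "U_A d $$ (r, a * 2^d) = (if r = a * 2^d + 2^(d - Suc a) then 1 else 0)"
proof -
  define N where "N = (2::nat)^d"
  have N: "N > 0" "a * N < d * N" using a by (simp_all add: N_def)
  have rd: "r div N < d" using r by (simp add: N_def less_mult_imp_div_less)
  have "U_A d $$ (r, a*N) = (\<Sum>i\<leftarrow>[0..<d]. kron (ketbra d i i) (flip_qubit d i) $$ (r, a*N))"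
    unfolding U_A_eq_msum_flip_qubit N_def[symmetric]
    by (rule index_msum) (use r N in \<open>auto simp: N_def\<close>)
  also have "\<dots> = (\<Sum>i<d. (if r div N = i \<and> a = i then 1 else 0) * flip_qubit d i $$ (r mod N, 0))"
    unfolding sum_set_upt_conv_sum_list_nat[symmetric] atLeast0LessThan
    using r N rd a by (intro sum.cong refl) (auto simp: index_kron N_def)
  also have "\<dots> = (if r div N = a then 1 else 0) * flip_qubit d a $$ (r mod N, 0)"
    by (subst sum_lessThan_single[OF a]) auto
  also have "\<dots> = (if r div N = a \<and> r mod N = 2^(d - Suc a) then 1 else 0)"
    using flip_qubit_col0[OF a, of "r mod N"] by (simp add: N_def)
  also have "(r div N = a \<and> r mod N = 2^(d - Suc a)) \<longleftrightarrow> r = a * N + 2^(d - Suc a)"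
    using two_pow_less[OF a] N(1) div_mult_mod_eq[of r N] by (auto simp: N_def)
  finally show ?thesis by (simp add: N_def)
qed

lemma kron_pow_ketbra_00: "kron_pow (ketbra 2 0 0) n = ketbra (2^n) 0 0"
proof (induction n)
  case 0
  then show ?case by (auto simp: ketbra_def)
next
  case (Suc n)
  show ?case
  proof (rule eq_matI)
    fix i j assume "i < dim_row (ketbra (2^Suc n) 0 0)" "j < dim_col (ketbra (2^Suc n) 0 0)"
    then have ij: "i < 2 * 2^n" "j < 2 * 2^n" by auto
    have d: "i div 2^n < 2" "j div 2^n < 2" using ij by (simp_all add: less_mult_imp_div_less)
    have "(i div 2^n = 0 \<and> i mod 2^n = 0) \<longleftrightarrow> i = 0" "(j div 2^n = 0 \<and> j mod 2^n = 0) \<longleftrightarrow> j = 0"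
      by (metis div_mult_mod_eq mult_0 add_0 div_0 mod_0)+
    then show "kron_pow (ketbra 2 0 0) (Suc n) $$ (i,j) = ketbra (2^Suc n) 0 0 $$ (i,j)"
      using ij d by (auto simp: Suc index_kron)
  qed (auto simp: Suc)
qed

lemma zero_proj_eq_ketbra: "zero_proj d = ketbra (2^d) 0 0"
  by (simp add: zero_proj_def kron_pow_ketbra_00)

lemma sum_lessThan_mult_multiples:
  assumes "(N::nat) > 0" "\<And>c. c < d*N \<Longrightarrow> c mod N \<noteq> 0 \<Longrightarrow> g c = 0"
  shows "(\<Sum>c<d*N. g c) = (\<Sum>P<d. g (P*N))"
proof -
  have "(\<Sum>c<d*N. g c) = (\<Sum>P<d. \<Sum>x<N. g (P*N+x))" by (rule sum_lessThan_mult)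
  also have "\<dots> = (\<Sum>P<d. g (P*N + 0))"
    using assms block_offset_less by (intro sum.cong refl sum_lessThan_single) auto
  finally show ?thesis by simp
qed

text \<open>The single Kraus operator \<open>|a\<rangle> \<mapsto> |a\<rangle>|2\<^sup>d\<^sup>-\<^sup>1\<^sup>-\<^sup>a\<rangle>\<close> of \<open>\<rho> \<mapsto> \<rho>'\<close>, indexed by \<open>{0}\<close>.\<close>
definition kraus_U_A :: "nat \<Rightarrow> nat \<Rightarrow> nat \<Rightarrow> nat \<Rightarrow> complex" where
  "kraus_U_A d l r a = (if r = a * 2^d + 2^(d - Suc a) then 1 else 0)"

lemma rho'_eq_kraus_map:
  assumes X: "X \<in> carrier_mat d d"
  shows "rho' d X = kraus_map d (d * 2^d) (kraus_U_A d) {0} X"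
proof (rule eq_matI)
  define N where "N = (2::nat)^d"
  have N: "N > 0" by (simp add: N_def)
  let ?Y = "kron X (zero_proj d)"
  fix i j assume "i < dim_row (kraus_map d (d * 2^d) (kraus_U_A d) {0} X)"
    "j < dim_col (kraus_map d (d * 2^d) (kraus_U_A d) {0} X)"
  then have ij: "i < d*N" "j < d*N" by (auto simp: N_def)
  have U: "U_A d \<in> carrier_mat (d*N) (d*N)" using U_A_carrier_mat by (simp add: N_def)
  have Y: "?Y \<in> carrier_mat (d*N) (d*N)" using X by (auto simp: zero_proj_eq_ketbra N_def)
  have Yi: "?Y $$ (c,e) = X$$(c div N, e div N) * (if c mod N = 0 \<and> e mod N = 0 then 1 else 0)"
    if "c < d*N" "e < d*N" for c e
    using that X N by (subst index_kron) (auto simp: zero_proj_eq_ketbra N_def)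
  have "rho' d X $$ (i,j) = (\<Sum>c<d*N. \<Sum>e<d*N. U_A d $$ (i,c) * ?Y $$ (c,e) * cnj (U_A d $$ (j,e)))"
    unfolding rho'_def by (rule index_sandwich[OF U Y ij])
  also have "\<dots> = (\<Sum>c<d*N. \<Sum>Q<d. U_A d $$ (i,c) * ?Y $$ (c,Q*N) * cnj (U_A d $$ (j,Q*N)))"
    by (intro sum.cong refl sum_lessThan_mult_multiples[OF N]) (auto simp: Yi)
  also have "\<dots> = (\<Sum>P<d. \<Sum>Q<d. U_A d $$ (i,P*N) * ?Y $$ (P*N,Q*N) * cnj (U_A d $$ (j,Q*N)))"
    using N by (intro sum_lessThan_mult_multiples sum.neutral ballI) (auto simp: Yi)
  also have "\<dots> = (\<Sum>P<d. \<Sum>Q<d. kraus_U_A d 0 i P * X$$(P,Q) * cnj (kraus_U_A d 0 j Q))"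
    using ij N by (intro sum.cong refl)
      (simp add: Yi U_A_col_basis[unfolded N_def[symmetric]] kraus_U_A_def N_def)
  also have "\<dots> = kraus_map d (d * 2^d) (kraus_U_A d) {0} X $$ (i,j)"
    using ij by (simp add: index_kraus_map N_def)
  finally show "rho' d X $$ (i,j) = kraus_map d (d * 2^d) (kraus_U_A d) {0} X $$ (i,j)" .
qed (auto simp: rho'_def)

lemma kraus_trace_preserving_U_A: "kraus_trace_preserving d (d * 2^d) (kraus_U_A d) {0}"
  unfolding kraus_trace_preserving_def
proof (intro allI impI)
  fix a b assume a: "a < d" and b: "b < d"
  define N where "N = (2::nat)^d"
  have pos: "a * N + 2^(d - Suc a) < d * N"
    using block_offset_less[OF a two_pow_less[OF a]] by (simp add: N_def)
  have "a * N + 2^(d - Suc a) \<noteq> b * N + 2^(d - Suc b)" if "a \<noteq> b"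
    using two_pow_less[OF a] two_pow_less[OF b] that unfolding N_def
    by (metis div_mult_self1 div_less add.commute add_0 power_not_zero zero_neq_numeral)
  then have "(\<Sum>r<d * N. cnj (kraus_U_A d 0 r b) * kraus_U_A d 0 r a) = (if a = b then 1 else 0)"
    by (subst sum_lessThan_single[OF pos]) (auto simp: kraus_U_A_def N_def)
  then show "(\<Sum>l\<in>{0}. \<Sum>r<d * 2^d. cnj (kraus_U_A d l r b) * kraus_U_A d l r a) = (if a = b then 1 else 0)"
    by (simp add: N_def)
qed

lemma cptp_rho': "cptp d (d * 2^d) (rho' d)"
  by (rule cptp_cong[OF rho'_eq_kraus_map cptp_kraus_map[OF kraus_trace_preserving_U_A]])

section \<open>Kraus operators of \<open>\<rho> \<mapsto> \<Delta>(\<rho>')\<close>\<close>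

definition diag_unimodular :: "nat \<Rightarrow> complex mat \<Rightarrow> bool" where
  "diag_unimodular n A \<longleftrightarrow> A \<in> carrier_mat n n \<and>
     (\<forall>x<n. \<forall>y<n. x \<noteq> y \<longrightarrow> A $$ (x,y) = 0) \<and> (\<forall>x<n. cmod (A $$ (x,x)) = 1)"

lemma diag_unimodular_kron:
  assumes A: "diag_unimodular p A" and B: "diag_unimodular q B"
  shows "diag_unimodular (p*q) (kron A B)"
proof -
  have Ac: "A \<in> carrier_mat p p" and Bc: "B \<in> carrier_mat q q"
    using A B by (auto simp: diag_unimodular_def)
  have idx: "kron A B $$ (x,y) = A $$ (x div q, y div q) * B $$ (x mod q, y mod q)"
    and div: "x div q < p" "y div q < p" and q: "0 < q"
    if "x < p*q" "y < p*q" for x y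
    using that Ac Bc by (auto simp: index_kron less_mult_imp_div_less intro: gr0I)
  have "kron A B $$ (x,y) = 0" if xy: "x < p*q" "y < p*q" "x \<noteq> y" for x y
  proof (cases "x div q = y div q")
    case True
    then have "x mod q \<noteq> y mod q" using xy(3) by (metis div_mult_mod_eq)
    then show ?thesis using idx[OF xy(1,2)] q[OF xy(1,2)] B by (simp add: diag_unimodular_def)
  next
    case False
    then show ?thesis using idx[OF xy(1,2)] div[OF xy(1,2)] A by (simp add: diag_unimodular_def)
  qed
  moreover have "cmod (kron A B $$ (x,x)) = 1" if "x < p*q" for x
    using idx[OF that that] div[OF that that] q[OF that that] A B
    by (simp add: diag_unimodular_def norm_mult)
  ultimately show ?thesis using Ac Bc by (auto simp: diag_unimodular_def)
qed

lemma diag_unimodular_foldr_kron: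
  assumes "\<And>j. j \<in> set js \<Longrightarrow> diag_unimodular 2 (M j)"
  shows "diag_unimodular (2^length js) (foldr (\<lambda>j acc. kron (M j) acc) js (1\<^sub>m 1))"
  using assms
proof (induction js)
  case Nil
  then show ?case by (auto simp: diag_unimodular_def)
next
  case (Cons j js)
  have "diag_unimodular (2 * 2^length js) (kron (M j) (foldr (\<lambda>j acc. kron (M j) acc) js (1\<^sub>m 1)))"
    using Cons by (intro diag_unimodular_kron) auto
  then show ?case by simp
qed

lemma diag_unimodular_U_D: "diag_unimodular (2^d) (U_D d m)"
proof -
  have "diag_unimodular (2^length [1..<Suc d]) (U_D d m)"
    unfolding U_D_def
    by (rule diag_unimodular_foldr_kron) (auto simp: diag_unimodular_def less_2_cases_iff)
  moreover have "length [1..<Suc d] = d" by (simp del: upt_Suc)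
  ultimately show ?thesis by (simp only:)
qed

lemma index_sandwich_diag:
  assumes "diag_unimodular n U" "P \<in> carrier_mat n n" "i < n" "j < n"
  shows "(U * P * adj U) $$ (i,j) = U $$ (i,i) * P $$ (i,j) * cnj (U $$ (j,j))"
proof -
  have U: "U \<in> carrier_mat n n" "\<And>x y. x < n \<Longrightarrow> y < n \<Longrightarrow> x \<noteq> y \<Longrightarrow> U $$ (x,y) = 0"
    using assms(1) by (auto simp: diag_unimodular_def)
  have "(U * P * adj U) $$ (i,j) = (\<Sum>a<n. \<Sum>b<n. U $$ (i,a) * P $$ (a,b) * cnj (U $$ (j,b)))"
    by (rule index_sandwich[OF U(1) assms(2-4)])
  also have "\<dots> = (\<Sum>b<n. U $$ (i,i) * P $$ (i,b) * cnj (U $$ (j,b)))"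
    using assms(3,4) U(2) by (intro sum_lessThan_single) (auto intro!: sum.neutral)
  also have "\<dots> = U $$ (i,i) * P $$ (i,j) * cnj (U $$ (j,j))"
    using assms(3,4) U(2) by (intro sum_lessThan_single) auto
  finally show ?thesis .
qed

lemma dim_fourier[simp]: "dim_row (fourier d) = d" "dim_col (fourier d) = d"
  by (simp_all add: fourier_def)

lemma fourier_cmod_sq:
  assumes "b < d" "a < d"
  shows "cnj (fourier d $$ (b,a)) * fourier d $$ (b,a) = complex_of_real (1 / real d)"
proof -
  have "cmod (fourier d $$ (b,a)) = 1 / sqrt (real d)"
    using assms by (simp add: fourier_def norm_divide)
  then show ?thesis by (simp add: cnj_mult_self_cmod power_divide)
qed

definition fourier_tensor_id :: "nat \<Rightarrow> complex mat" where
  "fourier_tensor_id d = kron (fourier d) (1\<^sub>m (2^d))"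

lemma dim_fourier_tensor_id[simp]:
  "dim_row (fourier_tensor_id d) = d * 2^d" "dim_col (fourier_tensor_id d) = d * 2^d"
  by (simp_all add: fourier_tensor_id_def)

lemma index_ketbra_tensor_id_mult:
  assumes t: "t < d" and R: "R < d * 2^d" and c: "c < d * 2^d"
    and G: "G \<in> carrier_mat (d * 2^d) (d * 2^d)"
  shows "(kron (ketbra d t t) (1\<^sub>m (2^d)) * G) $$ (R,c) =
     (if R div 2^d = t then G $$ (t * 2^d + R mod 2^d, c) else 0)"
proof -
  define N where "N = (2::nat)^d"
  have N: "N > 0" by (simp add: N_def)
  have A: "kron (ketbra d t t) (1\<^sub>m N) $$ (R,e) =
     (if R div N = t \<and> e = t * N + R mod N then 1 else 0)" if e: "e < d*N" for e
  proof -
    have "R div N < d" "e div N < d" using R e by (simp_all add: N_def less_mult_imp_div_less)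
    moreover have "e div N = t \<and> R mod N = e mod N \<longleftrightarrow> e = t * N + R mod N"
      using N div_mult_mod_eq[of e N] by auto
    ultimately show ?thesis using R e N by (subst index_kron) (auto simp: N_def)
  qed
  have "(kron (ketbra d t t) (1\<^sub>m N) * G) $$ (R,c)
      = (\<Sum>e<d*N. kron (ketbra d t t) (1\<^sub>m N) $$ (R,e) * G $$ (e,c))"
    using R c G by (subst index_mult_mat_lessThan) (auto simp: N_def)
  also have "\<dots> = (if R div N = t then G $$ (t * N + R mod N, c) else 0)"
    using block_offset_less[OF t, of "R mod N" N] N A
    by (auto intro!: sum.neutral simp: sum_lessThan_single[of "t * N + R mod N"])
  finally show ?thesis by (simp add: N_def)
qed

text \<open>Together with \<open>U\<^sub>D\<^sup>(\<^sup>m\<^sup>)\<close>, row block \<open>m\<close> of \<open>\<F> \<otimes> 1\<close> is the \<open>m\<close>-th Kraus operator of \<open>\<Delta>\<close>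
  (the paper's \<open>m \<in> {1..d}\<close> selects the 0-based block \<open>m - 1\<close>).\<close>
definition kraus_Delta :: "nat \<Rightarrow> nat \<Rightarrow> nat \<Rightarrow> nat \<Rightarrow> complex" where
  "kraus_Delta d m x c = U_D d m $$ (x,x) * fourier_tensor_id d $$ ((m - 1) * 2^d + x, c)"

lemma index_ptrace_Delta:
  assumes Y: "Y \<in> carrier_mat (d * 2^d) (d * 2^d)" and t: "t < d" and ij: "i < 2^d" "j < 2^d"
  shows "ptrace_first d (2^d) (kron (ketbra d t t) (1\<^sub>m (2^d)) * fourier_tensor_id d * Y
      * kron (adj (fourier d)) (1\<^sub>m (2^d))) $$ (i,j)
    = (\<Sum>e<d * 2^d. (\<Sum>c<d * 2^d. fourier_tensor_id d $$ (t * 2^d + i, c) * Y$$(c,e))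
        * cnj (fourier_tensor_id d $$ (t * 2^d + j, e)))"
proof -
  define N where "N = (2::nat)^d"
  define G where "G = fourier_tensor_id d"
  define AG where "AG = kron (ketbra d t t) (1\<^sub>m N) * G"
  have Gc: "G \<in> carrier_mat (d*N) (d*N)" by (simp add: G_def N_def carrier_matI)
  have AGc: "AG \<in> carrier_mat (d*N) (d*N)" by (simp add: AG_def G_def N_def carrier_matI)
  have Gadj: "kron (adj (fourier d)) (1\<^sub>m N) $$ (e,S) = cnj (G $$ (S,e))" if "e < d*N" "S < d*N" for e S
  proof -
    have "e div N < d" "S div N < d" using that by (simp_all add: less_mult_imp_div_less)
    then show ?thesis using that by (simp add: G_def fourier_tensor_id_def index_kron N_def)
  qed
  have Z: "(AG * Y * kron (adj (fourier d)) (1\<^sub>m N)) $$ (R,S) =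
     (\<Sum>e<d*N. (\<Sum>c<d*N. AG $$ (R,c) * Y$$(c,e)) * cnj (G $$ (S,e)))" if "R < d*N" "S < d*N" for R S
  proof -
    have "(AG * Y * kron (adj (fourier d)) (1\<^sub>m N)) $$ (R,S)
        = (\<Sum>e<d*N. (AG * Y) $$ (R,e) * kron (adj (fourier d)) (1\<^sub>m N) $$ (e,S))"
      using that AGc Y by (subst index_mult_mat_lessThan) (auto simp: N_def)
    also have "\<dots> = (\<Sum>e<d*N. (\<Sum>c<d*N. AG $$ (R,c) * Y$$(c,e)) * cnj (G $$ (S,e)))"
    proof (intro sum.cong refl)
      fix e assume e: "e \<in> {..<d*N}"
      have "(AG*Y)$$(R,e) = (\<Sum>c<d*N. AG$$(R,c) * Y$$(c,e))"
        using that e AGc Y by (subst index_mult_mat_lessThan) (auto simp: N_def)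
      then show "(AG * Y) $$ (R,e) * kron (adj (fourier d)) (1\<^sub>m N) $$ (e,S)
          = (\<Sum>c<d*N. AG $$ (R,c) * Y$$(c,e)) * cnj (G $$ (S,e))"
        using Gadj that e by simp
    qed
    finally show ?thesis .
  qed
  have tN: "s*N + i < d*N" "s*N + j < d*N" if "s < d" for s
    using that ij block_offset_less by (auto simp: N_def)
  have AGi: "AG $$ (s*N + i, c) = (if s = t then G $$ (t * N + i, c) else 0)"
    if "s < d" "c < d*N" for s c
    using index_ketbra_tensor_id_mult[OF t tN(1)[OF that(1), unfolded N_def] that(2)[unfolded N_def]] ij Gc
    by (simp add: AG_def N_def)
  have "ptrace_first d N (AG * Y * kron (adj (fourier d)) (1\<^sub>m N)) $$ (i,j) =
      (\<Sum>s<d. (AG * Y * kron (adj (fourier d)) (1\<^sub>m N)) $$ (s*N+i, s*N+j))"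
    using ij by (simp add: ptrace_first_def N_def)
  also have "\<dots> = (\<Sum>s<d. \<Sum>e<d*N. (\<Sum>c<d*N. AG $$ (s*N+i,c) * Y$$(c,e)) * cnj (G $$ (s*N+j,e)))"
    using tN by (intro sum.cong refl) (simp add: Z)
  also have "\<dots> = (\<Sum>e<d*N. (\<Sum>c<d*N. AG $$ (t*N+i,c) * Y$$(c,e)) * cnj (G $$ (t*N+j,e)))"
    by (rule sum_lessThan_single[OF t]) (auto simp: AGi intro!: sum.neutral)
  also have "\<dots> = (\<Sum>e<d*N. (\<Sum>c<d*N. G $$ (t*N+i,c) * Y$$(c,e)) * cnj (G $$ (t*N+j,e)))"
    using t by (intro sum.cong refl) (simp add: AGi)
  finally show ?thesis by (simp add: N_def AG_def G_def)
qed

lemma Delta_carrier_mat: "Delta d Y \<in> carrier_mat (2^d) (2^d)"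
  unfolding Delta_def
proof (rule msum_carrier_mat)
  fix m
  have "U_D d m \<in> carrier_mat (2^d) (2^d)"
    using diag_unimodular_U_D by (simp add: diag_unimodular_def)
  then show "U_D d m * ptrace_first d (2^d) (kron (ketbra d (m - 1) (m - 1)) (1\<^sub>m (2^d))
      * kron (fourier d) (1\<^sub>m (2^d)) * Y * kron (adj (fourier d)) (1\<^sub>m (2^d))) * adj (U_D d m)
      \<in> carrier_mat (2^d) (2^d)"
    by (intro carrier_matI) (simp_all add: ptrace_first_def)
qed

lemma Delta_eq_kraus_map:
  assumes Y: "Y \<in> carrier_mat (d * 2^d) (d * 2^d)"
  shows "Delta d Y = kraus_map (d * 2^d) (2^d) (kraus_Delta d) {1..<Suc d} Y"
proof (rule eq_matI)
  define N where "N = (2::nat)^d"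
  fix i j assume "i < dim_row (kraus_map (d * 2^d) (2^d) (kraus_Delta d) {1..<Suc d} Y)"
    "j < dim_col (kraus_map (d * 2^d) (2^d) (kraus_Delta d) {1..<Suc d} Y)"
  then have ij: "i < N" "j < N" by (auto simp: N_def)
  define PT where "PT = (\<lambda>m. ptrace_first d N (kron (ketbra d (m - 1) (m - 1)) (1\<^sub>m N)
      * kron (fourier d) (1\<^sub>m N) * Y * kron (adj (fourier d)) (1\<^sub>m N)))"
  have PTc: "PT m \<in> carrier_mat N N" for m by (simp add: PT_def ptrace_first_def)
  have UD: "diag_unimodular N (U_D d m)" for m using diag_unimodular_U_D by (simp add: N_def)
  have c: "U_D d m * PT m * adj (U_D d m) \<in> carrier_mat N N" for m
    using UD[of m] PTc[of m] by (auto simp: diag_unimodular_def)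
  have "Delta d Y = msum N (\<lambda>m. U_D d m * PT m * adj (U_D d m)) [1..<Suc d]"
    by (simp add: Delta_def PT_def N_def)
  then have "Delta d Y $$ (i,j) = (\<Sum>m\<leftarrow>[1..<Suc d]. (U_D d m * PT m * adj (U_D d m)) $$ (i,j))"
    using c ij by (simp only:) (intro index_msum)
  also have "\<dots> = (\<Sum>m\<in>{1..<Suc d}. \<Sum>c<d*N. \<Sum>e<d*N. kraus_Delta d m i c * Y$$(c,e) * cnj (kraus_Delta d m j e))"
    unfolding sum_set_upt_conv_sum_list_nat[symmetric] set_upt
  proof (intro sum.cong refl)
    fix m assume "m \<in> {1..<Suc d}"
    then have t: "m - 1 < d" by auto
    have "(U_D d m * PT m * adj (U_D d m)) $$ (i,j) = U_D d m $$ (i,i) * PT m $$ (i,j) * cnj (U_D d m $$ (j,j))"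
      by (rule index_sandwich_diag[OF UD PTc ij])
    also have "\<dots> = (\<Sum>e<d*N. \<Sum>c<d*N. kraus_Delta d m i c * Y$$(c,e) * cnj (kraus_Delta d m j e))"
      using index_ptrace_Delta[OF Y t ij[unfolded N_def]]
      by (simp add: PT_def N_def fourier_tensor_id_def kraus_Delta_def
          sum_distrib_left sum_distrib_right mult_ac)
    finally show "(U_D d m * PT m * adj (U_D d m)) $$ (i,j)
        = (\<Sum>c<d*N. \<Sum>e<d*N. kraus_Delta d m i c * Y$$(c,e) * cnj (kraus_Delta d m j e))"
      by (subst sum.swap)
  qed
  also have "\<dots> = kraus_map (d * 2^d) (2^d) (kraus_Delta d) {1..<Suc d} Y $$ (i,j)"
    using ij by (simp add: index_kraus_map N_def)
  finally show "Delta d Y $$ (i,j) = kraus_map (d * 2^d) (2^d) (kraus_Delta d) {1..<Suc d} Y $$ (i,j)" .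
qed (use Delta_carrier_mat in auto)

text \<open>The \<open>m\<close>-th Kraus operator of \<open>\<Delta> \<circ> (\<rho> \<mapsto> \<rho>')\<close>: it sends \<open>|a\<rangle>\<close> to a multiple of
  \<open>|2\<^sup>d\<^sup>-\<^sup>1\<^sup>-\<^sup>a\<rangle>\<close>.\<close>
definition kraus_Delta_rho' :: "nat \<Rightarrow> nat \<Rightarrow> nat \<Rightarrow> nat \<Rightarrow> complex" where
  "kraus_Delta_rho' d m x a =
     U_D d m $$ (x,x) * fourier d $$ (m - 1, a) * (if x = 2^(d - Suc a) then 1 else 0)"

lemma Delta_rho'_eq_kraus_map:
  assumes X: "X \<in> carrier_mat d d"
  shows "Delta d (rho' d X) = kraus_map d (2^d) (kraus_Delta_rho' d) {1..<Suc d} X"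
proof -
  define N where "N = (2::nat)^d"
  have "rho' d X \<in> carrier_mat (d * 2^d) (d * 2^d)" using rho'_eq_kraus_map[OF X] by simp
  then have "Delta d (rho' d X)
      = kraus_map (d * N) N (kraus_Delta d) {1..<Suc d} (kraus_map d (d * N) (kraus_U_A d) {0} X)"
    using Delta_eq_kraus_map rho'_eq_kraus_map[OF X] by (simp add: N_def)
  also have "\<dots> = kraus_map d N (\<lambda>l i a. \<Sum>c<d * N. kraus_Delta d l i c * kraus_U_A d 0 c a) {1..<Suc d} X"
    by (rule kraus_map_comp[OF X])
  also have "\<dots> = kraus_map d N (kraus_Delta_rho' d) {1..<Suc d} X"
  proof (rule kraus_map_cong)
    fix m x a assume m: "m \<in> {1..<Suc d}" and x: "x < N" and a: "a < d"
    have p: "2^(d - Suc a) < N" using two_pow_less[OF a] by (simp add: N_def)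
    have pos: "a * N + 2^(d - Suc a) < d * N" by (rule block_offset_less[OF a p])
    have i1: "(m - 1) * N + x < d * N" using m x by (intro block_offset_less) auto
    have "(\<Sum>c<d * N. kraus_Delta d m x c * kraus_U_A d 0 c a) = kraus_Delta d m x (a * N + 2^(d - Suc a))"
      by (subst sum_lessThan_single[OF pos]) (auto simp: kraus_U_A_def N_def)
    also have "\<dots> = kraus_Delta_rho' d m x a"
      using i1 pos x p
      by (simp add: kraus_Delta_def kraus_Delta_rho'_def fourier_tensor_id_def index_kron N_def)
    finally show "(\<Sum>c<d * N. kraus_Delta d m x c * kraus_U_A d 0 c a) = kraus_Delta_rho' d m x a" .
  qed
  finally show ?thesis by (simp add: N_def)
qed

lemma kraus_trace_preserving_Delta_rho':
  "kraus_trace_preserving d (2^d) (kraus_Delta_rho' d) {1..<Suc d}"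
  unfolding kraus_trace_preserving_def
proof (intro allI impI)
  fix a b assume a: "a < d" and b: "b < d"
  show "(\<Sum>m\<in>{1..<Suc d}. \<Sum>x<2^d. cnj (kraus_Delta_rho' d m x b) * kraus_Delta_rho' d m x a)
      = (if a = b then 1 else 0)"
  proof (cases "a = b")
    case False
    then have "2^(d - Suc a) \<noteq> (2::nat)^(d - Suc b)" using a b by (simp add: power_inject_exp)
    then have "cnj (kraus_Delta_rho' d m x b) * kraus_Delta_rho' d m x a = 0" for m x
      by (auto simp: kraus_Delta_rho'_def)
    then have "(\<Sum>m\<in>{1..<Suc d}. \<Sum>x<2^d. cnj (kraus_Delta_rho' d m x b) * kraus_Delta_rho' d m x a) = 0"
      by (intro sum.neutral ballI) simp
    then show ?thesis using False by simp
  next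
    case True
    have "(\<Sum>x<2^d. cnj (kraus_Delta_rho' d m x a) * kraus_Delta_rho' d m x a) = complex_of_real (1 / real d)"
      if m: "m \<in> {1..<Suc d}" for m
    proof -
      let ?x = "2^(d - Suc a) :: nat"
      have "(\<Sum>x<2^d. cnj (kraus_Delta_rho' d m x a) * kraus_Delta_rho' d m x a)
          = cnj (kraus_Delta_rho' d m ?x a) * kraus_Delta_rho' d m ?x a"
        by (rule sum_lessThan_single[OF two_pow_less[OF a]]) (simp add: kraus_Delta_rho'_def)
      also have "\<dots> = (cnj (U_D d m $$ (?x,?x)) * U_D d m $$ (?x,?x))
          * (cnj (fourier d $$ (m - 1, a)) * fourier d $$ (m - 1, a))"
        by (simp add: kraus_Delta_rho'_def mult_ac)
      also have "cnj (U_D d m $$ (?x,?x)) * U_D d m $$ (?x,?x) = 1"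
        using diag_unimodular_U_D[of d m] two_pow_less[OF a]
        by (simp add: diag_unimodular_def cnj_mult_self_cmod)
      also have "cnj (fourier d $$ (m - 1, a)) * fourier d $$ (m - 1, a) = complex_of_real (1 / real d)"
        using m a by (intro fourier_cmod_sq) auto
      finally show ?thesis by simp
    qed
    then show ?thesis using True a by simp
  qed
qed

lemma cptp_Delta_rho': "cptp d (2^d) (\<lambda>X. Delta d (rho' d X))"
  by (rule cptp_cong[OF Delta_rho'_eq_kraus_map cptp_kraus_map[OF kraus_trace_preserving_Delta_rho']])

section \<open>Images of states of low coherence rank\<close>

lemma prod_list_replicate_two[simp]: "prod_list (replicate d (2::nat)) = 2^d"
  by (simp add: prod_list_replicate)

lemma digit_replicate_two_pow:
  assumes "a < d" "j < d"
  shows "digit (replicate d 2) (2^(d - Suc a)) j = (if j = a then 1 else 0)"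
proof -
  have "((2::nat)^(d - Suc a) div 2^(d - Suc j)) mod 2 = (if d - Suc a = d - Suc j then 1 else 0)"
    by (simp add: mod_2_eq_odd bit_iff_odd[symmetric] bit_exp_iff)
  then show ?thesis using assms by (auto simp: digit_def)
qed

lemma kraus_apply_nonzero:
  assumes "vec_normalize (kraus_apply n m K l \<psi>) $ x \<noteq> 0" "x < m"
  obtains a where "a < n" "K l x a \<noteq> 0" "\<psi> $ a \<noteq> 0"
proof -
  have "(\<Sum>a<n. K l x a * \<psi>$a) \<noteq> 0"
    using assms by (simp add: vec_normalize_def kraus_apply_def)
  then obtain a where "a < n" "K l x a * \<psi>$a \<noteq> 0"
    using sum.not_neutral_contains_not_neutral by blast
  then show ?thesis using that by simp
qed

text \<open>\<open>U\<^sub>A\<close> entangles the qudit only with the qubits labelled by the support of \<open>\<psi>\<close>.\<close>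
lemma rho'_kraus_image_producible:
  assumes \<psi>: "dim_vec \<psi> = d" "coh_rank \<psi> < k"
    and nz: "vec_sq_norm (kraus_apply d (d * 2^d) (kraus_U_A d) 0 \<psi>) > 0"
  shows "k_producible_pure (d # replicate d 2) k (vec_normalize (kraus_apply d (d * 2^d) (kraus_U_A d) 0 \<psi>))"
proof -
  define w where "w = kraus_apply d (d * 2^d) (kraus_U_A d) 0 \<psi>"
  define S where "S = {a. a < d \<and> \<psi>$a \<noteq> 0}"
  have "card (insert 0 (Suc ` S)) \<le> Suc (card (Suc ` S))"
    by (rule card_insert_le_m1) (auto simp: S_def)
  also have "card (Suc ` S) = card S" by (simp add: card_image)
  also have "card S = coh_rank \<psi>" using \<psi>(1) by (simp add: coh_rank_def S_def)
  finally have card: "card (insert 0 (Suc ` S)) \<le> k" using \<psi>(2) by simp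
  show ?thesis unfolding w_def[symmetric]
  proof (rule k_producible_pure_of_support[where B="insert 0 (Suc ` S)"])
    show "unit_vec_c (prod_list (d # replicate d 2)) (vec_normalize w)"
      using unit_vec_normalize[of w] nz by (simp add: w_def kraus_apply_def)
  next
    fix r j assume r: "r < prod_list (d # replicate d 2)" and wr: "vec_normalize w $ r \<noteq> 0"
      and j: "j < length (d # replicate d 2)" and jB: "j \<notin> insert 0 (Suc ` S)"
    have r': "r < d * 2^d" using r by simp
    obtain a where a: "a < d" "kraus_U_A d 0 r a \<noteq> 0" "\<psi>$a \<noteq> 0"
      using kraus_apply_nonzero[OF wr[unfolded w_def] r'] by blast
    have ra: "r = a * 2^d + 2^(d - Suc a)" using a(2) by (simp add: kraus_U_A_def split: if_splits)
    have "j \<noteq> 0" using jB by simp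
    then obtain j' where j': "j = Suc j'" using not0_implies_Suc by blast
    then have j'd: "j' < d" "j' \<noteq> a" using j jB a(1,3) by (auto simp: S_def)
    have "digit (d # replicate d 2) r j = digit (replicate d 2) (r mod 2^d) j'"
      using j' j'd digit_mod_prod_list[of j' "replicate d 2" r] by (simp add: digit_Cons_Suc)
    also have "r mod 2^d = 2^(d - Suc a)" using ra two_pow_less[OF a(1)] by simp
    finally show "digit (d # replicate d 2) r j = 0"
      using digit_replicate_two_pow[OF a(1) j'd(1)] j'd(2) by simp
  next
    show "insert 0 (Suc ` S) \<subseteq> {..<length (d # replicate d 2)}" by (auto simp: S_def)
  qed (use card \<psi>(2) in simp_all)
qed

text \<open>After \<open>\<Delta>\<close> the qudit is gone and only the qubits in the support of \<open>\<psi>\<close> remain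
  entangled.\<close>
lemma Delta_rho'_kraus_image_producible:
  assumes \<psi>: "dim_vec \<psi> = d" "coh_rank \<psi> < k"
    and nz: "vec_sq_norm (kraus_apply d (2^d) (kraus_Delta_rho' d) m \<psi>) > 0"
  shows "k_producible_pure (replicate d 2) (k - 1) (vec_normalize (kraus_apply d (2^d) (kraus_Delta_rho' d) m \<psi>))"
proof -
  define w where "w = kraus_apply d (2^d) (kraus_Delta_rho' d) m \<psi>"
  define S where "S = {a. a < d \<and> \<psi>$a \<noteq> 0}"
  have wd: "dim_vec w = 2^d" by (simp add: w_def kraus_apply_def)
  have supp: "\<exists>a<d. x = 2^(d - Suc a) \<and> \<psi>$a \<noteq> 0"
    if x: "x < 2^d" "vec_normalize w $ x \<noteq> 0" for x
  proof -
    obtain a where "a < d" "kraus_Delta_rho' d m x a \<noteq> 0" "\<psi>$a \<noteq> 0"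
      using kraus_apply_nonzero[OF x(2)[unfolded w_def] x(1)] by blast
    then show ?thesis by (auto simp: kraus_Delta_rho'_def split: if_splits)
  qed
  have fin: "finite S" by (simp add: S_def)
  have "S \<noteq> {}"
  proof
    assume "S = {}"
    then have "vec_normalize w $ x = 0" if "x < 2^d" for x using supp[OF that] by (auto simp: S_def)
    then have "w $ x = 0" if "x < 2^d" for x using that nz wd vec_normalize_eq_0_iff[of x w] by (simp add: w_def)
    then have "vec_sq_norm w = 0" using wd by (simp add: vec_sq_norm_def)
    then show False using nz by (simp add: w_def)
  qed
  moreover have "card S = coh_rank \<psi>" using \<psi>(1) by (simp add: coh_rank_def S_def)
  ultimately have card: "card S \<le> k - 1" "1 \<le> k - 1"
    using \<psi>(2) fin card_gt_0_iff[of S] by linarith+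
  show ?thesis unfolding w_def[symmetric]
  proof (rule k_producible_pure_of_support[where B=S])
    show "unit_vec_c (prod_list (replicate d 2)) (vec_normalize w)"
      using unit_vec_normalize[of w] nz wd by (simp add: w_def)
  next
    fix x j assume "x < prod_list (replicate d 2)" "vec_normalize w $ x \<noteq> 0"
      and j: "j < length (replicate d 2)" "j \<notin> S"
    then obtain a where a: "a < d" "x = 2^(d - Suc a)" "\<psi>$a \<noteq> 0" using supp by auto
    then show "digit (replicate d 2) x j = 0" using digit_replicate_two_pow[OF a(1)] j by (auto simp: S_def)
  qed (use card \<open>S \<noteq> {}\<close> in \<open>auto simp: S_def\<close>)
qed

section \<open>Coherence and producibility under the two maps\<close>

lemma coh_rank_le_dim: "coh_rank \<psi> \<le> dim_vec \<psi>"
proof -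
  have "{i. i < dim_vec \<psi> \<and> \<psi> $ i \<noteq> 0} \<subseteq> {..<dim_vec \<psi>}" by auto
  then show ?thesis unfolding coh_rank_def by (metis card_lessThan card_mono finite_lessThan)
qed

text \<open>The coherence number is a \<open>LEAST\<close>, so it is attained only because every density matrix has
  some pure-state decomposition.\<close>
lemma incoh_set_pure_decomp:
  assumes "\<sigma> \<in> incoh_set d r"
  obtains ps where "pure_decomp d \<sigma> ps" "\<forall>(p,\<psi>)\<in>set ps. coh_rank \<psi> \<le> r"
proof -
  have dens: "density d \<sigma>" and cn: "coh_number d \<sigma> \<le> r" using assms by (auto simp: incoh_set_def)
  obtain ps0 where ps0: "pure_decomp d \<sigma> ps0" using density_has_pure_decomp[OF dens] by blast
  have "\<forall>(p,\<psi>)\<in>set ps0. coh_rank \<psi> \<le> d"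
    using ps0 coh_rank_le_dim unfolding pure_decomp_def unit_vec_c_def by fastforce
  then have ex: "\<exists>ps. pure_decomp d \<sigma> ps \<and> (\<forall>(p,\<psi>)\<in>set ps. coh_rank \<psi> \<le> d)" using ps0 by blast
  have "\<exists>ps. pure_decomp d \<sigma> ps \<and> (\<forall>(p,\<psi>)\<in>set ps. coh_rank \<psi> \<le> coh_number d \<sigma>)"
    unfolding coh_number_def by (rule LeastI_ex) (use ex in blast)
  then obtain ps where "pure_decomp d \<sigma> ps" "\<forall>(p,\<psi>)\<in>set ps. coh_rank \<psi> \<le> coh_number d \<sigma>"
    by blast
  with cn show ?thesis by (intro that) auto
qed

lemma ketbra_in_incoh_set:
  assumes "0 < d" "1 \<le> r"
  shows "ketbra d 0 0 \<in> incoh_set d r"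
proof -
  define e where "e = vec d (\<lambda>i. if i = 0 then (1::complex) else 0)"
  have "(\<Sum>i<d. (cmod (e$i))^2) = (cmod (e$0))^2"
    by (rule sum_lessThan_single[OF assms(1)]) (simp add: e_def)
  then have "unit_vec_c d e" using assms by (simp add: unit_vec_c_def e_def)
  moreover have "ketbra d 0 0 = msum d (\<lambda>(p,\<psi>). complex_of_real p \<cdot>\<^sub>m proj \<psi>) [(1, e)]"
    by (rule eq_matI) (auto simp: msum_def ketbra_def e_def)
  ultimately have pd: "pure_decomp d (ketbra d 0 0) [(1, e)]"
    by (simp add: pure_decomp_def)
  have "{i. i < dim_vec e \<and> e $ i \<noteq> 0} = {0}" using assms by (auto simp: e_def split: if_splits)
  then have cr: "coh_rank e = 1" by (simp add: coh_rank_def)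
  have "coh_number d (ketbra d 0 0) \<le> 1"
    unfolding coh_number_def by (rule Least_le) (use pd cr in auto)
  then show ?thesis using pure_decomp_density[OF pd] assms by (simp add: incoh_set_def)
qed

lemma producible_set_density: "\<sigma> \<in> producible_set dims k \<Longrightarrow> density (prod_list dims) \<sigma>"
  by (auto simp: producible_set_def intro: pure_decomp_density)

lemma rho'_incoh_set_producible:
  assumes "\<sigma> \<in> incoh_set d (k - 1)" "1 \<le> k"
  shows "rho' d \<sigma> \<in> producible_set (d # replicate d 2) k"
proof -
  obtain ps where ps: "pure_decomp d \<sigma> ps" "\<forall>(p,\<psi>)\<in>set ps. coh_rank \<psi> \<le> k - 1"
    using incoh_set_pure_decomp[OF assms(1)] .
  have "\<sigma> \<in> carrier_mat d d" using pure_decomp_entries(1)[OF ps(1)] .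
  moreover have "\<exists>ps'. pure_decomp (d * 2^d) (kraus_map d (d * 2^d) (kraus_U_A d) (set [0]) \<sigma>) ps' \<and>
      (\<forall>(p,\<psi>)\<in>set ps'. k_producible_pure (d # replicate d 2) k \<psi>)"
  proof (rule kraus_map_pure_decomp[OF ps(1)])
    fix l p \<psi> assume "l \<in> set [0::nat]" "(p,\<psi>) \<in> set ps"
      "vec_sq_norm (kraus_apply d (d * 2^d) (kraus_U_A d) l \<psi>) > 0"
    moreover have "dim_vec \<psi> = d" "coh_rank \<psi> < k"
      using ps \<open>(p,\<psi>) \<in> set ps\<close> assms(2) by (auto simp: pure_decomp_def unit_vec_c_def)
    ultimately show "k_producible_pure (d # replicate d 2) k (vec_normalize (kraus_apply d (d * 2^d) (kraus_U_A d) l \<psi>))"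
      by (simp add: rho'_kraus_image_producible)
  qed (use kraus_trace_preserving_U_A in simp_all)
  ultimately show ?thesis by (simp add: producible_set_def rho'_eq_kraus_map)
qed

lemma Delta_rho'_incoh_set_producible:
  assumes "\<sigma> \<in> incoh_set d (k - 1)" "1 \<le> k"
  shows "Delta d (rho' d \<sigma>) \<in> producible_set (replicate d 2) (k - 1)"
proof -
  obtain ps where ps: "pure_decomp d \<sigma> ps" "\<forall>(p,\<psi>)\<in>set ps. coh_rank \<psi> \<le> k - 1"
    using incoh_set_pure_decomp[OF assms(1)] .
  have "\<sigma> \<in> carrier_mat d d" using pure_decomp_entries(1)[OF ps(1)] .
  moreover have "\<exists>ps'. pure_decomp (2^d) (kraus_map d (2^d) (kraus_Delta_rho' d) (set [1..<Suc d]) \<sigma>) ps' \<and>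
      (\<forall>(p,\<psi>)\<in>set ps'. k_producible_pure (replicate d 2) (k - 1) \<psi>)"
  proof (rule kraus_map_pure_decomp[OF ps(1)])
    fix l p \<psi> assume "l \<in> set [1..<Suc d]" "(p,\<psi>) \<in> set ps"
      "vec_sq_norm (kraus_apply d (2^d) (kraus_Delta_rho' d) l \<psi>) > 0"
    moreover have "dim_vec \<psi> = d" "coh_rank \<psi> < k"
      using ps \<open>(p,\<psi>) \<in> set ps\<close> assms(2) by (auto simp: pure_decomp_def unit_vec_c_def)
    ultimately show "k_producible_pure (replicate d 2) (k - 1) (vec_normalize (kraus_apply d (2^d) (kraus_Delta_rho' d) l \<psi>))"
      using Delta_rho'_kraus_image_producible by blast
  qed (simp_all only: set_upt kraus_trace_preserving_Delta_rho' distinct_upt)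
  ultimately show ?thesis
    unfolding producible_set_def prod_list_replicate_two
    by (simp only: Delta_rho'_eq_kraus_map set_upt mem_Collect_eq)
qed

section \<open>Contractive distances\<close>

lemma contractive_distance_Inf_le:
  assumes D: "contractive_distance D" and \<Phi>: "cptp n m \<Phi>" and \<rho>: "density n \<rho>"
    and A: "A \<noteq> {}" "\<And>\<sigma>. \<sigma> \<in> A \<Longrightarrow> density n \<sigma> \<and> \<Phi> \<sigma> \<in> B"
    and B: "\<And>\<tau>. \<tau> \<in> B \<Longrightarrow> density m \<tau>"
  shows "Inf ((\<lambda>\<tau>. D (\<Phi> \<rho>) \<tau>) ` B) \<le> Inf ((\<lambda>\<sigma>. D \<rho> \<sigma>) ` A)"
proof (rule cInf_greatest)
  show "(\<lambda>\<sigma>. D \<rho> \<sigma>) ` A \<noteq> {}" using A(1) by simp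
next
  fix x assume "x \<in> (\<lambda>\<sigma>. D \<rho> \<sigma>) ` A"
  then obtain \<sigma> where \<sigma>: "\<sigma> \<in> A" "x = D \<rho> \<sigma>" by blast
  have "bdd_below ((\<lambda>\<tau>. D (\<Phi> \<rho>) \<tau>) ` B)"
  proof (rule bdd_belowI[of _ 0])
    fix y assume "y \<in> (\<lambda>\<tau>. D (\<Phi> \<rho>) \<tau>) ` B"
    then show "0 \<le> y"
      using D cptp_density[OF \<Phi> \<rho>] B unfolding contractive_distance_def by blast
  qed
  then have "Inf ((\<lambda>\<tau>. D (\<Phi> \<rho>) \<tau>) ` B) \<le> D (\<Phi> \<rho>) (\<Phi> \<sigma>)"
    using A(2)[OF \<sigma>(1)] by (intro cInf_lower) auto
  also have "\<dots> \<le> D \<rho> \<sigma>"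
    using D \<Phi> \<rho> A(2)[OF \<sigma>(1)] unfolding contractive_distance_def by blast
  finally show "Inf ((\<lambda>\<tau>. D (\<Phi> \<rho>) \<tau>) ` B) \<le> x" using \<sigma>(2) by simp
qed

theorem theorem3:
  fixes D :: "complex mat \<Rightarrow> complex mat \<Rightarrow> real"
    and d k :: nat and \<rho> :: "complex mat"
  assumes "contractive_distance D"
    and "density d \<rho>"
    and "2 \<le> k" and "k \<le> d"
  shows "C_D D d k \<rho> \<ge> E_D D (d # replicate d 2) (k + 1) (rho' d \<rho>)
       \<and> C_D D d k \<rho> \<ge> E_D D (replicate d 2) k (Delta d (rho' d \<rho>))"
proof -
  have "ketbra d 0 0 \<in> incoh_set d (k - 1)"
    using assms(3,4) by (intro ketbra_in_incoh_set) auto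
  then have nonempty: "incoh_set d (k - 1) \<noteq> {}" by blast
  have "E_D D (d # replicate d 2) (k + 1) (rho' d \<rho>) \<le> C_D D d k \<rho>"
    unfolding E_D_def C_D_def
  proof (rule contractive_distance_Inf_le[OF assms(1) cptp_rho' assms(2) nonempty])
    fix \<sigma> assume "\<sigma> \<in> incoh_set d (k - 1)"
    then show "density d \<sigma> \<and> rho' d \<sigma> \<in> producible_set (d # replicate d 2) (k + 1 - 1)"
      using rho'_incoh_set_producible assms(3) by (simp add: incoh_set_def)
  qed (use producible_set_density in fastforce)
  moreover have "E_D D (replicate d 2) k (Delta d (rho' d \<rho>)) \<le> C_D D d k \<rho>"
    unfolding E_D_def C_D_def
  proof (rule contractive_distance_Inf_le[OF assms(1) cptp_Delta_rho' assms(2) nonempty])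
    fix \<sigma> assume "\<sigma> \<in> incoh_set d (k - 1)"
    then show "density d \<sigma> \<and> Delta d (rho' d \<sigma>) \<in> producible_set (replicate d 2) (k - 1)"
      using Delta_rho'_incoh_set_producible assms(3) by (simp add: incoh_set_def)
  qed (use producible_set_density in fastforce)
  ultimately show ?thesis by simp
qed

end
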